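(* Let $(\mathcal{M},\times,1)$ be a cartesian monoidal category with equivalences. Then there is an isomorphism of categories \[ \mathrm{HtyAlg}(\mathbf{Mon},\mathcal{M})\;\cong\;\mathbf{Special}((\Delta^+)^{\mathrm{op}},\mathcal{M}). \]
   Context: A monoidal category with equivalences is a monoidal category with a class of morphisms (equivalences) containing all isomorphisms, satisfying two-out-of-three for composition, and closed under $\otimes$; cartesian means the monoidal structure is given by chosen finite products. $\Delta$: objects $n=\{0,\dots,n-1\}$ ($n\ge0$), order-preserving maps, monoidal under ordinal sum $+$ with unit $0$. $\mathrm{HtyAlg}(\mathbf{Mon},\mathcal{M})$ (homotopy monoids in $\mathcal{M}$) is the category whose objects are colax monoidal functors $(X,\xi):(\Delta,+,0)\to(\mathcal{M},\times,1)$ (functor $X$ with natural, not necessarily invertible maps $\xi_{m,n}:X(m+n)\to X(m)\times X(n)$, $\xi_0:X(0)\to1$ satisfying coassociativity and counit axioms) with $\xi_0$ and all $\xi_{m,n}$ equivalences, and whose morphisms are monoidal transformations. $\Delta^+$: objects $[n]=\{0,\dots,n\}$, order-preserving maps. A special simplicial object in $\mathcal{M}$ is a functor $Y:(\Delta^+)^{\mathrm{op}}\to\mathcal{M}$ such that for each $n\ge0$ the map $(Y(\beta^n_0),\dots,Y(\beta^n_{n-1})):Y[n]\to Y[1]^n$ is an equivalence, where $\beta^n_j:[1]\to[n]$, $\beta^n_j(i)=i+j$ (equivalently, the maps $(Y(\alpha^1_{m,n}),Y(\alpha^2_{m,n})):Y[m+n]\to Y[m]\times Y[n]$ with $\alpha^1_{m,n}(i)=i$,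 $\alpha^2_{m,n}(i)=m+i$, and $Y[0]\to1$ are equivalences). $\mathbf{Special}((\Delta^+)^{\mathrm{op}},\mathcal{M})$ is the category of special simplicial objects and natural transformations. *)

theory Defs
  imports Main
begin

record ('o,'a) category =
  Ob :: "'o set"
  Ar :: "'a set"
  Dom :: "'a \<Rightarrow> 'o"
  Cod :: "'a \<Rightarrow> 'o"
  Idm :: "'o \<Rightarrow> 'a"
  Comp :: "'a \<Rightarrow> 'a \<Rightarrow> 'a"   (* Comp C g f = g o f *)

definition hom :: "('o,'a,'e) category_scheme \<Rightarrow> 'o \<Rightarrow> 'o \<Rightarrow> 'a set" where
  "hom C A B = {f \<in> Ar C. Dom C f = A \<and> Cod C f = B}"

definition is_category :: "('o,'a,'e) category_scheme \<Rightarrow> bool" where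
  "is_category C \<longleftrightarrow>
     (\<forall>f\<in>Ar C. Dom C f \<in> Ob C \<and> Cod C f \<in> Ob C) \<and>
     (\<forall>A\<in>Ob C. Idm C A \<in> hom C A A) \<and>
     (\<forall>f\<in>Ar C. \<forall>g\<in>Ar C. Cod C f = Dom C g \<longrightarrow> Comp C g f \<in> hom C (Dom C f) (Cod C g)) \<and>
     (\<forall>f\<in>Ar C. Comp C (Idm C (Cod C f)) f = f \<and> Comp C f (Idm C (Dom C f)) = f) \<and>
     (\<forall>f\<in>Ar C. \<forall>g\<in>Ar C. \<forall>h\<in>Ar C. Cod C f = Dom C g \<longrightarrow> Cod C g = Dom C h \<longrightarrow>
        Comp C h (Comp C g f) = Comp C (Comp C h g) f)"

definition is_iso :: "('o,'a,'e) category_scheme \<Rightarrow> 'a \<Rightarrow> bool" where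
  "is_iso C f \<longleftrightarrow> f \<in> Ar C \<and>
     (\<exists>g\<in>hom C (Cod C f) (Dom C f). Comp C g f = Idm C (Dom C f) \<and> Comp C f g = Idm C (Cod C f))"

definition is_functor ::
  "('o,'a,'e) category_scheme \<Rightarrow> ('p,'b,'d) category_scheme \<Rightarrow> ('o \<Rightarrow> 'p) \<Rightarrow> ('a \<Rightarrow> 'b) \<Rightarrow> bool" where
  "is_functor C D Fo Fa \<longleftrightarrow>
     (\<forall>A\<in>Ob C. Fo A \<in> Ob D) \<and>
     (\<forall>f\<in>Ar C. Fa f \<in> hom D (Fo (Dom C f)) (Fo (Cod C f))) \<and>
     (\<forall>A\<in>Ob C. Fa (Idm C A) = Idm D (Fo A)) \<and>
     (\<forall>f\<in>Ar C. \<forall>g\<in>Ar C. Cod C f = Dom C g \<longrightarrow> Fa (Comp C g f) = Comp D (Fa g) (Fa f))"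

definition iso_categories :: "('o,'a,'e) category_scheme \<Rightarrow> ('p,'b,'d) category_scheme \<Rightarrow> bool" where
  "iso_categories C D \<longleftrightarrow>
     (\<exists>Fo Fa Go Ga. is_functor C D Fo Fa \<and> is_functor D C Go Ga \<and>
        (\<forall>A\<in>Ob C. Go (Fo A) = A) \<and> (\<forall>B\<in>Ob D. Fo (Go B) = B) \<and>
        (\<forall>f\<in>Ar C. Ga (Fa f) = f) \<and> (\<forall>g\<in>Ar D. Fa (Ga g) = g))"

text \<open>Chosen finite products: a chosen terminal object and chosen binary products
  (with projections and pairing); the monoidal structure is given by them.\<close>
record ('o,'a) cmc = "('o,'a) category" +
  one :: 'o
  bang :: "'o \<Rightarrow> 'a"
  prd :: "'o \<Rightarrow> 'o \<Rightarrow> 'o"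
  pr1 :: "'o \<Rightarrow> 'o \<Rightarrow> 'a"
  pr2 :: "'o \<Rightarrow> 'o \<Rightarrow> 'a"
  pair :: "'a \<Rightarrow> 'a \<Rightarrow> 'a"
  Eqv :: "'a set"

definition tens :: "('o,'a) cmc \<Rightarrow> 'a \<Rightarrow> 'a \<Rightarrow> 'a" where
  "tens M f g = pair M (Comp M f (pr1 M (Dom M f) (Dom M g))) (Comp M g (pr2 M (Dom M f) (Dom M g)))"

definition assoc :: "('o,'a) cmc \<Rightarrow> 'o \<Rightarrow> 'o \<Rightarrow> 'o \<Rightarrow> 'a" where
  "assoc M A B C =
     pair M (Comp M (pr1 M A B) (pr1 M (prd M A B) C))
            (pair M (Comp M (pr2 M A B) (pr1 M (prd M A B) C)) (pr2 M (prd M A B) C))"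

definition is_cartesian :: "('o,'a) cmc \<Rightarrow> bool" where
  "is_cartesian M \<longleftrightarrow> is_category M \<and>
     one M \<in> Ob M \<and>
     (\<forall>A\<in>Ob M. bang M A \<in> hom M A (one M) \<and> (\<forall>f\<in>hom M A (one M). f = bang M A)) \<and>
     (\<forall>A\<in>Ob M. \<forall>B\<in>Ob M.
        prd M A B \<in> Ob M \<and> pr1 M A B \<in> hom M (prd M A B) A \<and> pr2 M A B \<in> hom M (prd M A B) B \<and>
        (\<forall>Z\<in>Ob M. \<forall>f\<in>hom M Z A. \<forall>g\<in>hom M Z B.
           pair M f g \<in> hom M Z (prd M A B) \<and>
           Comp M (pr1 M A B) (pair M f g) = f \<and> Comp M (pr2 M A B) (pair M f g) = g \<and>
           (\<forall>h\<in>hom M Z (prd M A B).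
              Comp M (pr1 M A B) h = f \<and> Comp M (pr2 M A B) h = g \<longrightarrow> h = pair M f g)))"

definition cartesian_with_equivalences :: "('o,'a) cmc \<Rightarrow> bool" where
  "cartesian_with_equivalences M \<longleftrightarrow> is_cartesian M \<and>
     Eqv M \<subseteq> Ar M \<and>
     (\<forall>f. is_iso M f \<longrightarrow> f \<in> Eqv M) \<and>
     (\<forall>f\<in>Ar M. \<forall>g\<in>Ar M. Cod M f = Dom M g \<longrightarrow>
        ((f \<in> Eqv M \<and> g \<in> Eqv M \<longrightarrow> Comp M g f \<in> Eqv M) \<and>
         (f \<in> Eqv M \<and> Comp M g f \<in> Eqv M \<longrightarrow> g \<in> Eqv M) \<and>
         (g \<in> Eqv M \<and> Comp M g f \<in> Eqv M \<longrightarrow> f \<in> Eqv M))) \<and>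
     (\<forall>f\<in>Eqv M. \<forall>g\<in>Eqv M. tens M f g \<in> Eqv M)"

text \<open>A morphism of \<Delta> from m = {0,...,m-1} to n is a triple (m, n, l) where the list l
  (of length m) lists the values of an order-preserving map, all < n.
  A morphism of \<Delta>+ from [m] = {0,...,m} to [n] is (m, n, l) with l of length m+1, values \<le> n.\<close>
type_synonym smor = "nat \<times> nat \<times> nat list"

definition delta_mor :: "smor \<Rightarrow> bool" where
  "delta_mor t = (case t of (m, n, l) \<Rightarrow> length l = m \<and> sorted l \<and> (\<forall>x\<in>set l. x < n))"

definition deltap_mor :: "smor \<Rightarrow> bool" where
  "deltap_mor t = (case t of (m, n, l) \<Rightarrow> length l = Suc m \<and> sorted l \<and> (\<forall>x\<in>set l. x \<le> n))"

definition delta_id :: "nat \<Rightarrow> smor" where "delta_id n = (n, n, [0..<n])"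
definition deltap_id :: "nat \<Rightarrow> smor" where "deltap_id n = (n, n, [0..<Suc n])"

definition scomp :: "smor \<Rightarrow> smor \<Rightarrow> smor" where
  "scomp g f = (case f of (m, _, lf) \<Rightarrow> case g of (_, p, lg) \<Rightarrow> (m, p, map (\<lambda>i. lg ! i) lf))"

definition dsum :: "smor \<Rightarrow> smor \<Rightarrow> smor" where
  "dsum f g = (case f of (m, n, lf) \<Rightarrow> case g of (m', n', lg) \<Rightarrow> (m + m', n + n', lf @ map (\<lambda>x. n + x) lg))"

definition beta :: "nat \<Rightarrow> nat \<Rightarrow> smor" where "beta n j = (1, n, [j, Suc j])"

record ('o,'a) colax =
  hob :: "nat \<Rightarrow> 'o"
  har :: "smor \<Rightarrow> 'a"
  xi :: "nat \<Rightarrow> nat \<Rightarrow> 'a"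
  xi0 :: 'a

definition is_htymon :: "('o,'a) cmc \<Rightarrow> ('o,'a) colax \<Rightarrow> bool" where
  "is_htymon M X \<longleftrightarrow>
     \<comment> \<open>functor \<Delta> \<rightarrow> M\<close>
     (\<forall>n. hob X n \<in> Ob M) \<and>
     (\<forall>m n l. delta_mor (m, n, l) \<longrightarrow> har X (m, n, l) \<in> hom M (hob X m) (hob X n)) \<and>
     (\<forall>t. \<not> delta_mor t \<longrightarrow> har X t = undefined) \<and>
     (\<forall>n. har X (delta_id n) = Idm M (hob X n)) \<and>
     (\<forall>f g. delta_mor f \<and> delta_mor g \<and> fst (snd f) = fst g \<longrightarrow>
        har X (scomp g f) = Comp M (har X g) (har X f)) \<and>
     \<comment> \<open>colax structure maps\<close>
     (\<forall>m n. xi X m n \<in> hom M (hob X (m + n)) (prd M (hob X m) (hob X n))) \<and>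
     xi0 X \<in> hom M (hob X 0) (one M) \<and>
     \<comment> \<open>naturality of \<xi>\<close>
     (\<forall>f g. delta_mor f \<and> delta_mor g \<longrightarrow>
        Comp M (tens M (har X f) (har X g)) (xi X (fst f) (fst g)) =
        Comp M (xi X (fst (snd f)) (fst (snd g))) (har X (dsum f g))) \<and>
     \<comment> \<open>coassociativity\<close>
     (\<forall>l m n.
        Comp M (assoc M (hob X l) (hob X m) (hob X n))
          (Comp M (tens M (xi X l m) (Idm M (hob X n))) (xi X (l + m) n)) =
        Comp M (tens M (Idm M (hob X l)) (xi X m n)) (xi X l (m + n))) \<and>
     \<comment> \<open>counit\<close>
     (\<forall>n. Comp M (pr2 M (one M) (hob X n))
            (Comp M (tens M (xi0 X) (Idm M (hob X n))) (xi X 0 n)) = Idm M (hob X n)) \<and>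
     (\<forall>n. Comp M (pr1 M (hob X n) (one M))
            (Comp M (tens M (Idm M (hob X n)) (xi0 X)) (xi X n 0)) = Idm M (hob X n)) \<and>
     \<comment> \<open>homotopy condition\<close>
     xi0 X \<in> Eqv M \<and> (\<forall>m n. xi X m n \<in> Eqv M)"

definition is_montrans :: "('o,'a) cmc \<Rightarrow> ('o,'a) colax \<Rightarrow> ('o,'a) colax \<Rightarrow> (nat \<Rightarrow> 'a) \<Rightarrow> bool" where
  "is_montrans M X Y \<theta> \<longleftrightarrow>
     (\<forall>n. \<theta> n \<in> hom M (hob X n) (hob Y n)) \<and>
     (\<forall>m n l. delta_mor (m, n, l) \<longrightarrow>
        Comp M (\<theta> n) (har X (m, n, l)) = Comp M (har Y (m, n, l)) (\<theta> m)) \<and>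
     (\<forall>m n. Comp M (xi Y m n) (\<theta> (m + n)) = Comp M (tens M (\<theta> m) (\<theta> n)) (xi X m n)) \<and>
     Comp M (xi0 Y) (\<theta> 0) = xi0 X"

definition HtyAlg_Mon ::
  "('o,'a) cmc \<Rightarrow> (('o,'a) colax, ('o,'a) colax \<times> ('o,'a) colax \<times> (nat \<Rightarrow> 'a)) category" where
  "HtyAlg_Mon M = \<lparr> Ob = {X. is_htymon M X},
     Ar = {(X, Y, \<theta>). is_htymon M X \<and> is_htymon M Y \<and> is_montrans M X Y \<theta>},
     Dom = (\<lambda>(X, Y, \<theta>). X), Cod = (\<lambda>(X, Y, \<theta>). Y),
     Idm = (\<lambda>X. (X, X, \<lambda>n. Idm M (hob X n))),
     Comp = (\<lambda>(Y', Z, \<psi>) (X, Y, \<theta>). (X, Z, \<lambda>n. Comp M (\<psi> n) (\<theta> n))) \<rparr>"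

record ('o,'a) simpobj =
  sob :: "nat \<Rightarrow> 'o"
  sar :: "smor \<Rightarrow> 'a"

fun pw :: "('o,'a) cmc \<Rightarrow> 'o \<Rightarrow> nat \<Rightarrow> 'o" where
  "pw M A 0 = one M"
| "pw M A (Suc k) = prd M (pw M A k) A"

fun tupl :: "('o,'a) cmc \<Rightarrow> 'o \<Rightarrow> (nat \<Rightarrow> 'a) \<Rightarrow> nat \<Rightarrow> 'a" where
  "tupl M Z g 0 = bang M Z"
| "tupl M Z g (Suc k) = pair M (tupl M Z g k) (g k)"

definition is_special :: "('o,'a) cmc \<Rightarrow> ('o,'a) simpobj \<Rightarrow> bool" where
  "is_special M Y \<longleftrightarrow>
     \<comment> \<open>functor (\<Delta>+)^op \<rightarrow> M\<close>
     (\<forall>n. sob Y n \<in> Ob M) \<and>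
     (\<forall>m n l. deltap_mor (m, n, l) \<longrightarrow> sar Y (m, n, l) \<in> hom M (sob Y n) (sob Y m)) \<and>
     (\<forall>t. \<not> deltap_mor t \<longrightarrow> sar Y t = undefined) \<and>
     (\<forall>n. sar Y (deltap_id n) = Idm M (sob Y n)) \<and>
     (\<forall>f g. deltap_mor f \<and> deltap_mor g \<and> fst (snd f) = fst g \<longrightarrow>
        sar Y (scomp g f) = Comp M (sar Y f) (sar Y g)) \<and>
     \<comment> \<open>Segal-type condition\<close>
     (\<forall>n. tupl M (sob Y n) (\<lambda>j. sar Y (beta n j)) n \<in> Eqv M)"

definition is_nattrans_sp :: "('o,'a) cmc \<Rightarrow> ('o,'a) simpobj \<Rightarrow> ('o,'a) simpobj \<Rightarrow> (nat \<Rightarrow> 'a) \<Rightarrow> bool" where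
  "is_nattrans_sp M Y Y' \<theta> \<longleftrightarrow>
     (\<forall>n. \<theta> n \<in> hom M (sob Y n) (sob Y' n)) \<and>
     (\<forall>m n l. deltap_mor (m, n, l) \<longrightarrow>
        Comp M (\<theta> m) (sar Y (m, n, l)) = Comp M (sar Y' (m, n, l)) (\<theta> n))"

definition Special ::
  "('o,'a) cmc \<Rightarrow> (('o,'a) simpobj, ('o,'a) simpobj \<times> ('o,'a) simpobj \<times> (nat \<Rightarrow> 'a)) category" where
  "Special M = \<lparr> Ob = {Y. is_special M Y},
     Ar = {(Y, Y', \<theta>). is_special M Y \<and> is_special M Y' \<and> is_nattrans_sp M Y Y' \<theta>},
     Dom = (\<lambda>(Y, Y', \<theta>). Y), Cod = (\<lambda>(Y, Y', \<theta>). Y'),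
     Idm = (\<lambda>Y. (Y, Y, \<lambda>n. Idm M (sob Y n))),
     Comp = (\<lambda>(Y', Z, \<psi>) (Y, Y'', \<theta>). (Y, Z, \<lambda>n. Comp M (\<psi> n) (\<theta> n))) \<rparr>"

end

(* An order-preserving map f : m -> n of \<Delta> corresponds contravariantly to the
   endpoint-preserving map f* : [n] -> [m], j \<mapsto> #{i. f i < j}, of \<Delta>+.  A special
   simplicial object Y therefore restricts to a functor X n = Y[n] on \<Delta>, with
   \<xi>_{m,n} = (Y \<alpha>1, Y \<alpha>2); coassociativity and counitality are identities between
   the \<alpha>'s, and the Segal condition makes every \<xi>_{m,n} an equivalence by induction
   on n, using coassociativity against \<xi>_{m,1}.

   Conversely, every t : [m] -> [n] of \<Delta>+ is recovered from the map
   t# : n -> m + 2, i \<mapsto> #{k. t k \<le> i}, of \<Delta> as the dual of t# restricted along the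
   inner inclusion [m] -> [m + 2].  A homotopy monoid X thus acts on t by X(t#) followed
   by the middle projection X(1 + m + 1) -> X(m) built from \<xi>.  The assignment t \<mapsto> t#
   is functorial only up to collapsing the outer points, and naturality of \<xi> lets the
   middle projection absorb this defect.  Both constructions keep the components of
   morphisms and are mutually inverse on objects. *)

theory Submission
  imports Defs
begin

section \<open>Duality between \<Delta> and \<Delta>+\<close>

definition count_below :: "nat list \<Rightarrow> nat \<Rightarrow> nat" where
  "count_below l x = length (filter (\<lambda>y. y < x) l)"

lemma count_below_card: "count_below l x = card {i. i < length l \<and> l ! i < x}"
  unfolding count_below_def by (simp add: length_filter_conv_card)

lemma count_below_le_iff:
  assumes "sorted l" "i < length l"
  shows "count_below l x \<le> i \<longleftrightarrow> x \<le> l ! i"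
  using assms
proof (induction l arbitrary: i)
  case Nil then show ?case by simp
next
  case (Cons a l)
  have below_head: "count_below l x = 0" if "x \<le> a"
    using Cons.prems(1) that unfolding count_below_def by (auto simp: filter_empty_conv)
  show ?case
  proof (cases i)
    case 0 then show ?thesis using below_head by (auto simp: count_below_def)
  next
    case (Suc j)
    have "a \<le> l ! j" using Cons.prems Suc by (auto simp: sorted_iff_nth_mono_less)
    then show ?thesis using Cons Suc below_head by (auto simp: count_below_def)
  qed
qed

lemma less_count_below_iff:
  "sorted l \<Longrightarrow> i < length l \<Longrightarrow> i < count_below l x \<longleftrightarrow> l ! i < x"
  using count_below_le_iff[of l i x] by linarith

lemma count_below_le_length: "count_below l x \<le> length l"
  unfolding count_below_def by simp

lemma count_below_eq_length: "\<forall>y\<in>set l. y < c \<Longrightarrow> c \<le> x \<Longrightarrow> count_below l x = length l"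
  unfolding count_below_def by (subst filter_True) auto

lemma count_below_0 [simp]: "count_below l 0 = 0"
  unfolding count_below_def by simp

lemma count_below_append: "count_below (l @ l') x = count_below l x + count_below l' x"
  unfolding count_below_def by simp

lemma count_below_mono: "x \<le> y \<Longrightarrow> count_below l x \<le> count_below l y"
  unfolding count_below_def by (induction l) auto

lemma count_below_shift: "count_below (map ((+) c) l) (c + x) = count_below l x"
  unfolding count_below_def by (simp add: comp_def)

lemma count_below_shift_eq_0: "x \<le> c \<Longrightarrow> count_below (map ((+) c) l) x = 0"
  unfolding count_below_def by (auto simp: filter_empty_conv)

lemma count_below_map_upt: "count_below (map f [0..<n]) x = card {j. j < n \<and> f j < x}"
  unfolding count_below_card by (rule arg_cong[where f=card]) auto

lemma card_less_min: "card {j. j < (n::nat) \<and> j < x} = min n x"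
proof -
  have "{j. j < n \<and> j < x} = {..<min n x}" by auto
  then show ?thesis by simp
qed

lemma count_below_upt: "count_below [0..<n] x = min n x"
  using count_below_map_upt[of "\<lambda>i. i" n x] by (simp add: card_less_min)

lemma count_below_map_nth:
  "sorted l \<Longrightarrow> (\<And>i. i \<in> set l' \<Longrightarrow> i < length l) \<Longrightarrow>
   count_below (map (nth l) l') x = count_below l' (count_below l x)"
  unfolding count_below_card[of "map (nth l) l'"] count_below_card[of l']
  by (rule arg_cong[where f=card]) (auto simp: less_count_below_iff)

lemma count_below_delta_dual_list:
  assumes "sorted l" "i < length l" "\<forall>x\<in>set l. x < n"
  shows "count_below (map (count_below l) [0..<Suc n]) (Suc i) = Suc (l ! i)"
proof -
  have "count_below (map (count_below l) [0..<Suc n]) (Suc i) = card {j. j < Suc n \<and> j < Suc (l ! i)}"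
    unfolding count_below_map_upt using assms count_below_le_iff[of l i]
    by (intro arg_cong[where f=card]) (auto simp: less_Suc_eq_le)
  then show ?thesis using assms by (simp add: card_less_min)
qed

lemma count_below_deltap_dual_list:
  assumes "sorted l" "j < length l" "\<forall>x\<in>set l. x \<le> n"
  shows "count_below (map (\<lambda>i. count_below l (Suc i)) [0..<n]) (Suc j) = l ! j"
proof -
  have "count_below (map (\<lambda>i. count_below l (Suc i)) [0..<n]) (Suc j) = card {i. i < n \<and> i < l ! j}"
    unfolding count_below_map_upt using assms count_below_le_iff[of l j]
    by (intro arg_cong[where f=card]) (auto simp: less_Suc_eq_le Suc_le_eq)
  then show ?thesis using assms by (simp add: card_less_min)
qed

text \<open>\<^term>\<open>delta_dual\<close> is the map f \<mapsto> f* and \<^term>\<open>deltap_dual\<close> the map t \<mapsto> t#.\<close>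

definition delta_dual :: "smor \<Rightarrow> smor" where
  "delta_dual t = (case t of (m, n, l) \<Rightarrow> (n, m, map (count_below l) [0..<Suc n]))"

definition deltap_dual :: "smor \<Rightarrow> smor" where
  "deltap_dual t = (case t of (m, n, l) \<Rightarrow> (n, Suc (Suc m), map (\<lambda>i. count_below l (Suc i)) [0..<n]))"

definition alpha1 :: "nat \<Rightarrow> nat \<Rightarrow> smor" where
  "alpha1 m n = (m, m + n, [0..<Suc m])"

definition alpha2 :: "nat \<Rightarrow> nat \<Rightarrow> smor" where
  "alpha2 m n = (n, m + n, map ((+) m) [0..<Suc n])"

definition delta_bang :: "nat \<Rightarrow> smor" where
  "delta_bang k = (k, 1, replicate k 0)"

lemma sorted_map_upt: "mono f \<Longrightarrow> sorted (map f [a..<b])"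
  by (simp add: sorted_iff_nth_mono monoD del: upt.simps(2))

lemma deltap_mor_delta_dual [simp]: "delta_mor t \<Longrightarrow> deltap_mor (delta_dual t)"
  unfolding delta_mor_def deltap_mor_def delta_dual_def
  by (auto simp: sorted_map_upt mono_def count_below_mono count_below_le_length
      simp del: upt_Suc split: prod.splits)

lemma delta_mor_deltap_dual [simp]: "deltap_mor t \<Longrightarrow> delta_mor (deltap_dual t)"
  unfolding delta_mor_def deltap_mor_def deltap_dual_def
  by (auto simp: sorted_map_upt mono_def count_below_mono less_Suc_eq_le
      count_below_le_length[THEN order_trans] split: prod.splits)

lemma deltap_mor_alpha1 [simp]: "deltap_mor (alpha1 m n)"
  unfolding deltap_mor_def alpha1_def by (auto simp del: upt_Suc)

lemma deltap_mor_alpha2 [simp]: "deltap_mor (alpha2 m n)"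
  unfolding deltap_mor_def alpha2_def by (auto simp: sorted_map_upt mono_def simp del: upt_Suc)

lemma delta_mor_delta_bang [simp]: "delta_mor (delta_bang k)"
  unfolding delta_mor_def delta_bang_def by auto

lemma delta_mor_delta_id [simp]: "delta_mor (delta_id n)"
  unfolding delta_mor_def delta_id_def by auto

lemma deltap_mor_deltap_id [simp]: "deltap_mor (deltap_id n)"
  unfolding deltap_mor_def deltap_id_def by (auto simp del: upt_Suc)

lemma deltap_mor_beta: "j < n \<Longrightarrow> deltap_mor (beta n j)"
  unfolding deltap_mor_def beta_def by auto

lemma delta_mor_dsum [simp]: "delta_mor f \<Longrightarrow> delta_mor g \<Longrightarrow> delta_mor (dsum f g)"
  unfolding delta_mor_def dsum_def
  by (auto simp: sorted_append sorted_map intro: sorted_wrt_mono_rel[rotated] split: prod.splits)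

lemma delta_mor_scomp [simp]:
  "delta_mor f \<Longrightarrow> delta_mor g \<Longrightarrow> fst (snd f) = fst g \<Longrightarrow> delta_mor (scomp g f)"
  unfolding delta_mor_def scomp_def by (auto simp: sorted_iff_nth_mono split: prod.splits)

lemma deltap_mor_scomp [simp]:
  "deltap_mor f \<Longrightarrow> deltap_mor g \<Longrightarrow> fst (snd f) = fst g \<Longrightarrow> deltap_mor (scomp g f)"
  unfolding deltap_mor_def scomp_def by (auto simp: sorted_iff_nth_mono less_Suc_eq_le split: prod.splits)

lemma dsum_dims [simp]:
  "fst (dsum f g) = fst f + fst g" "fst (snd (dsum f g)) = fst (snd f) + fst (snd g)"
  unfolding dsum_def by (auto split: prod.splits)

lemma scomp_dims [simp]: "fst (scomp g f) = fst f" "fst (snd (scomp g f)) = fst (snd g)"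
  unfolding scomp_def by (auto split: prod.splits)

lemma delta_dual_dims [simp]: "fst (delta_dual t) = fst (snd t)" "fst (snd (delta_dual t)) = fst t"
  unfolding delta_dual_def by (auto split: prod.splits)

lemma deltap_dual_dims [simp]: "fst (deltap_dual t) = fst (snd t)" "fst (snd (deltap_dual t)) = Suc (Suc (fst t))"
  unfolding deltap_dual_def by (auto split: prod.splits)

lemma alpha1_dims [simp]: "fst (alpha1 m n) = m" "fst (snd (alpha1 m n)) = m + n"
  unfolding alpha1_def by auto

lemma alpha2_dims [simp]: "fst (alpha2 m n) = n" "fst (snd (alpha2 m n)) = m + n"
  unfolding alpha2_def by auto

lemma delta_bang_dims [simp]: "fst (delta_bang k) = k" "fst (snd (delta_bang k)) = 1"
  unfolding delta_bang_def by auto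

lemma delta_id_dims [simp]: "fst (delta_id k) = k" "fst (snd (delta_id k)) = k"
  unfolding delta_id_def by auto

lemma beta_dims [simp]: "fst (beta n j) = 1" "fst (snd (beta n j)) = n"
  unfolding beta_def by auto

lemma delta_dual_scomp:
  assumes "delta_mor f" "delta_mor g" "fst (snd f) = fst g"
  shows "delta_dual (scomp g f) = scomp (delta_dual f) (delta_dual g)"
  using assms count_below_le_length[of "snd (snd g)"]
  unfolding delta_dual_def scomp_def delta_mor_def
  by (auto simp: count_below_map_nth less_Suc_eq_le simp del: upt_Suc intro!: map_cong split: prod.splits)

lemma delta_dual_delta_id [simp]: "delta_dual (delta_id n) = deltap_id n"
  unfolding delta_dual_def delta_id_def deltap_id_def
  by (auto simp: count_below_upt less_Suc_eq_le simp del: upt_Suc intro!: nth_equalityI)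

lemma alpha1_natural:
  assumes "delta_mor f" "delta_mor g"
  shows "scomp (alpha1 (fst f) (fst g)) (delta_dual f)
    = scomp (delta_dual (dsum f g)) (alpha1 (fst (snd f)) (fst (snd g)))"
  using assms count_below_le_length[of "snd (snd f)"]
  unfolding delta_dual_def scomp_def delta_mor_def alpha1_def dsum_def
  by (auto simp: count_below_append count_below_shift_eq_0 less_Suc_eq_le nth_append
      simp del: upt_Suc intro!: nth_equalityI split: prod.splits)

lemma alpha2_natural:
  assumes "delta_mor f" "delta_mor g"
  shows "scomp (alpha2 (fst f) (fst g)) (delta_dual g)
    = scomp (delta_dual (dsum f g)) (alpha2 (fst (snd f)) (fst (snd g)))"
proof -
  obtain m m' lf n n' lg where fg: "f = (m, m', lf)" "g = (n, n', lg)"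
    by (cases f, cases g) auto
  moreover have "count_below lf (m' + x) = length lf" for x
    using assms fg by (intro count_below_eq_length) (auto simp: delta_mor_def)
  ultimately show ?thesis
    using assms count_below_le_length[of lg]
    unfolding delta_dual_def scomp_def delta_mor_def alpha2_def dsum_def
    by (auto simp: count_below_append count_below_shift less_Suc_eq_le nth_append
        simp del: upt_Suc intro!: nth_equalityI)
qed

lemma alpha1_alpha1: "scomp (alpha1 (l + m) n) (alpha1 l m) = alpha1 l (m + n)"
  unfolding scomp_def alpha1_def
  by (auto simp: less_Suc_eq_le nth_append simp del: upt_Suc intro!: nth_equalityI)

lemma alpha1_alpha2: "scomp (alpha1 (l + m) n) (alpha2 l m) = scomp (alpha2 l (m + n)) (alpha1 m n)"
  unfolding scomp_def alpha1_def alpha2_def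
  by (auto simp: less_Suc_eq_le nth_append simp del: upt_Suc intro!: nth_equalityI)

lemma alpha2_alpha2: "scomp (alpha2 l (m + n)) (alpha2 m n) = alpha2 (l + m) n"
  unfolding scomp_def alpha2_def
  by (auto simp: less_Suc_eq_le nth_append simp del: upt_Suc intro!: nth_equalityI)

lemma alpha1_0 [simp]: "alpha1 m 0 = deltap_id m"
  unfolding alpha1_def deltap_id_def by simp

lemma alpha2_0 [simp]: "alpha2 0 n = deltap_id n"
  unfolding alpha2_def deltap_id_def by (simp add: map_idI)

lemma alpha1_beta: "j < k \<Longrightarrow> scomp (alpha1 k 1) (beta k j) = beta (Suc k) j"
  unfolding scomp_def alpha1_def beta_def by (simp del: upt_Suc add: nth_upt)

lemma alpha2_eq_beta: "alpha2 k 1 = beta (Suc k) k"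
  unfolding alpha2_def beta_def by simp

lemma deltap_dual_delta_dual:
  "delta_mor f \<Longrightarrow> deltap_dual (delta_dual f) = dsum (delta_bang 0) (dsum f (delta_bang 0))"
  unfolding deltap_dual_def delta_dual_def dsum_def delta_bang_def delta_mor_def
  by (auto simp: count_below_delta_dual_list simp del: upt_Suc intro!: nth_equalityI split: prod.splits)

lemma deltap_dual_alpha1: "deltap_dual (alpha1 m n) = dsum (delta_bang 0) (dsum (delta_id m) (delta_bang n))"
  unfolding deltap_dual_def alpha1_def dsum_def delta_bang_def delta_id_def
  by (auto simp: count_below_upt nth_append simp del: upt_Suc intro!: nth_equalityI)

lemma deltap_dual_alpha2: "deltap_dual (alpha2 m n) = dsum (delta_bang m) (dsum (delta_id n) (delta_bang 0))"
proof -
  have "count_below (map ((+) m) [0..<Suc n]) (Suc i) = (if i < m then 0 else Suc (i - m))"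
    if "i < m + n" for i
  proof (cases "i < m")
    case False
    then have "count_below (map ((+) m) [0..<Suc n]) (m + Suc (i - m)) = Suc (i - m)"
      using that by (simp only: count_below_shift count_below_upt)
    then show ?thesis using False by simp
  qed (simp add: count_below_shift_eq_0 del: upt_Suc)
  then show ?thesis
    unfolding deltap_dual_def alpha2_def dsum_def delta_bang_def delta_id_def
    by (auto simp: nth_append simp del: upt_Suc intro!: nth_equalityI)
qed

lemma delta_dual_deltap_dual:
  assumes "deltap_mor t"
  shows "scomp (delta_dual (deltap_dual t)) (scomp (alpha2 1 (fst t + 1)) (alpha1 (fst t) 1)) = t"
  using assms
  unfolding delta_dual_def deltap_dual_def scomp_def alpha1_def alpha2_def deltap_mor_def
  by (auto simp: count_below_deltap_dual_list nth_upt less_Suc_eq_le simp del: upt_Suc intro!: nth_equalityI split: prod.splits)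

lemma scomp_conv: "scomp g f = (fst f, fst (snd g), map (nth (snd (snd g))) (snd (snd f)))"
  unfolding scomp_def by (simp split: prod.splits)

lemma deltap_dual_scomp:
  assumes f: "deltap_mor f" and g: "deltap_mor g" and composable: "fst (snd f) = fst g"
  shows "deltap_dual (scomp g f) =
    scomp (dsum (delta_bang 2) (dsum (delta_id (fst f)) (delta_bang 2)))
      (scomp (dsum (delta_id 1) (dsum (deltap_dual f) (delta_id 1))) (deltap_dual g))"
proof -
  obtain m n lf p lg where fg: "f = (m, n, lf)" "g = (n, p, lg)"
    using composable by (cases f, cases g) auto
  define C where "C = snd (snd (dsum (delta_bang 2) (dsum (delta_id m) (delta_bang 2))))"
  define D where "D = snd (snd (dsum (delta_id 1) (dsum (deltap_dual f) (delta_id 1))))"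
  \<comment> \<open>D pads the dual of f by one point on each side, and C collapses the two outermost points on each side.\<close>
  have collapse: "C ! (D ! x) = count_below lf x" if x: "x \<le> Suc n" for x
  proof -
    have bound: "count_below lf x \<le> Suc m"
      using count_below_le_length[of lf x] f fg by (simp add: deltap_mor_def)
    consider "x = 0" | "0 < x" "x \<le> n" | "x = Suc n" using x by linarith
    then show ?thesis
    proof cases
      case 3
      then have "count_below lf x = Suc m"
        using f fg count_below_eq_length[of lf "Suc n" x] by (auto simp: deltap_mor_def less_Suc_eq_le)
      with 3 show ?thesis unfolding C_def D_def dsum_def delta_bang_def delta_id_def deltap_dual_def fg
        by (simp add: nth_append numeral_2_eq_2)
    qed (use bound in \<open>auto simp: C_def D_def fg dsum_def delta_bang_def delta_id_def deltap_dual_def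
          nth_append numeral_2_eq_2 nth_Cons' simp del: upt_Suc\<close>)
  qed
  have "count_below lg (Suc i) \<le> Suc n" for i
    using count_below_le_length[of lg] g fg by (simp add: deltap_mor_def)
  then have "map (\<lambda>i. count_below lf (count_below lg (Suc i))) [0..<p]
      = map (nth C) (map (nth D) (map (\<lambda>i. count_below lg (Suc i)) [0..<p]))"
    by (simp add: collapse)
  moreover have "count_below (map (nth lg) lf) x = count_below lf (count_below lg x)" for x
    using f g fg by (intro count_below_map_nth) (auto simp: deltap_mor_def less_Suc_eq_le)
  ultimately show ?thesis
    unfolding scomp_conv C_def D_def by (simp add: fg deltap_dual_def scomp_def)
qed

section \<open>Cartesian categories with equivalences\<close>

locale cartesian_eqv =
  fixes M :: "('o,'a) cmc"
  assumes eqv: "cartesian_with_equivalences M"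
begin

abbreviation comp_M (infixr "\<cdot>" 70) where "g \<cdot> f \<equiv> Comp M g f"

lemma cartesian: "is_cartesian M"
  using eqv unfolding cartesian_with_equivalences_def by auto

lemma category: "is_category M"
  using cartesian unfolding is_cartesian_def by auto

lemma Dom_Ob [simp]: "f \<in> Ar M \<Longrightarrow> Dom M f \<in> Ob M"
  using category unfolding is_category_def by auto
lemma Cod_Ob [simp]: "f \<in> Ar M \<Longrightarrow> Cod M f \<in> Ob M"
  using category unfolding is_category_def by auto

lemma comp_Ar [simp]: "f \<in> Ar M \<Longrightarrow> g \<in> Ar M \<Longrightarrow> Cod M f = Dom M g \<Longrightarrow> g \<cdot> f \<in> Ar M"
  using category unfolding is_category_def hom_def by auto
lemma comp_Dom [simp]: "f \<in> Ar M \<Longrightarrow> g \<in> Ar M \<Longrightarrow> Cod M f = Dom M g \<Longrightarrow> Dom M (g \<cdot> f) = Dom M f"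
  using category unfolding is_category_def hom_def by auto
lemma comp_Cod [simp]: "f \<in> Ar M \<Longrightarrow> g \<in> Ar M \<Longrightarrow> Cod M f = Dom M g \<Longrightarrow> Cod M (g \<cdot> f) = Cod M g"
  using category unfolding is_category_def hom_def by auto

lemma comp_assoc [simp]:
  "f \<in> Ar M \<Longrightarrow> g \<in> Ar M \<Longrightarrow> h \<in> Ar M \<Longrightarrow> Cod M f = Dom M g \<Longrightarrow> Cod M g = Dom M h \<Longrightarrow>
   (h \<cdot> g) \<cdot> f = h \<cdot> (g \<cdot> f)"
  using category unfolding is_category_def by metis

lemma comp_reassoc:
  "a \<cdot> b = c \<Longrightarrow> r \<in> Ar M \<Longrightarrow> b \<in> Ar M \<Longrightarrow> a \<in> Ar M \<Longrightarrow>
   Cod M r = Dom M b \<Longrightarrow> Cod M b = Dom M a \<Longrightarrow> a \<cdot> (b \<cdot> r) = c \<cdot> r"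
  by (metis comp_assoc)

lemma comp_reassoc2:
  "a \<cdot> b = c \<cdot> d \<Longrightarrow> r \<in> Ar M \<Longrightarrow> b \<in> Ar M \<Longrightarrow> a \<in> Ar M \<Longrightarrow> d \<in> Ar M \<Longrightarrow> c \<in> Ar M \<Longrightarrow>
   Cod M r = Dom M b \<Longrightarrow> Cod M b = Dom M a \<Longrightarrow> Cod M r = Dom M d \<Longrightarrow> Cod M d = Dom M c \<Longrightarrow>
   a \<cdot> (b \<cdot> r) = c \<cdot> (d \<cdot> r)"
  by (metis comp_assoc)

lemma Idm_Ar [simp]: "A \<in> Ob M \<Longrightarrow> Idm M A \<in> Ar M"
  using category unfolding is_category_def hom_def by auto
lemma Idm_Dom [simp]: "A \<in> Ob M \<Longrightarrow> Dom M (Idm M A) = A"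
  using category unfolding is_category_def hom_def by auto
lemma Idm_Cod [simp]: "A \<in> Ob M \<Longrightarrow> Cod M (Idm M A) = A"
  using category unfolding is_category_def hom_def by auto
lemma Idm_left [simp]: "f \<in> Ar M \<Longrightarrow> Cod M f = A \<Longrightarrow> Idm M A \<cdot> f = f"
  using category unfolding is_category_def by auto
lemma Idm_right [simp]: "f \<in> Ar M \<Longrightarrow> Dom M f = A \<Longrightarrow> f \<cdot> Idm M A = f"
  using category unfolding is_category_def by auto

lemma one_Ob [simp]: "one M \<in> Ob M"
  using cartesian unfolding is_cartesian_def by auto
lemma bang_Ar [simp]: "A \<in> Ob M \<Longrightarrow> bang M A \<in> Ar M"
  using cartesian unfolding is_cartesian_def hom_def by auto
lemma bang_Dom [simp]: "A \<in> Ob M \<Longrightarrow> Dom M (bang M A) = A"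
  using cartesian unfolding is_cartesian_def hom_def by auto
lemma bang_Cod [simp]: "A \<in> Ob M \<Longrightarrow> Cod M (bang M A) = one M"
  using cartesian unfolding is_cartesian_def hom_def by auto
lemma bang_unique: "f \<in> Ar M \<Longrightarrow> Cod M f = one M \<Longrightarrow> f = bang M (Dom M f)"
  using cartesian unfolding is_cartesian_def hom_def by auto

lemma bang_comp: "f \<in> Ar M \<Longrightarrow> Cod M f = A \<Longrightarrow> A \<in> Ob M \<Longrightarrow> bang M A \<cdot> f = bang M (Dom M f)"
  using bang_unique[of "bang M A \<cdot> f"] by auto

lemma prd_Ob [simp]: "A \<in> Ob M \<Longrightarrow> B \<in> Ob M \<Longrightarrow> prd M A B \<in> Ob M"
  using cartesian unfolding is_cartesian_def by auto
lemma pr1_Ar [simp]: "A \<in> Ob M \<Longrightarrow> B \<in> Ob M \<Longrightarrow> pr1 M A B \<in> Ar M"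
  using cartesian unfolding is_cartesian_def hom_def by auto
lemma pr1_Dom [simp]: "A \<in> Ob M \<Longrightarrow> B \<in> Ob M \<Longrightarrow> Dom M (pr1 M A B) = prd M A B"
  using cartesian unfolding is_cartesian_def hom_def by auto
lemma pr1_Cod [simp]: "A \<in> Ob M \<Longrightarrow> B \<in> Ob M \<Longrightarrow> Cod M (pr1 M A B) = A"
  using cartesian unfolding is_cartesian_def hom_def by auto
lemma pr2_Ar [simp]: "A \<in> Ob M \<Longrightarrow> B \<in> Ob M \<Longrightarrow> pr2 M A B \<in> Ar M"
  using cartesian unfolding is_cartesian_def hom_def by auto
lemma pr2_Dom [simp]: "A \<in> Ob M \<Longrightarrow> B \<in> Ob M \<Longrightarrow> Dom M (pr2 M A B) = prd M A B"
  using cartesian unfolding is_cartesian_def hom_def by auto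
lemma pr2_Cod [simp]: "A \<in> Ob M \<Longrightarrow> B \<in> Ob M \<Longrightarrow> Cod M (pr2 M A B) = B"
  using cartesian unfolding is_cartesian_def hom_def by auto

lemma pair_universal:
  assumes "f \<in> Ar M" "g \<in> Ar M" "Dom M f = Dom M g"
  shows "pair M f g \<in> hom M (Dom M f) (prd M (Cod M f) (Cod M g)) \<and>
    pr1 M (Cod M f) (Cod M g) \<cdot> pair M f g = f \<and> pr2 M (Cod M f) (Cod M g) \<cdot> pair M f g = g"
proof -
  have "f \<in> hom M (Dom M f) (Cod M f)" "g \<in> hom M (Dom M f) (Cod M g)"
    using assms by (auto simp: hom_def)
  then show ?thesis
    using cartesian assms unfolding is_cartesian_def by (metis Cod_Ob Dom_Ob)
qed

lemma pair_Ar [simp]: "f \<in> Ar M \<Longrightarrow> g \<in> Ar M \<Longrightarrow> Dom M f = Dom M g \<Longrightarrow> pair M f g \<in> Ar M"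
  using pair_universal by (auto simp: hom_def)
lemma pair_Dom [simp]: "f \<in> Ar M \<Longrightarrow> g \<in> Ar M \<Longrightarrow> Dom M f = Dom M g \<Longrightarrow> Dom M (pair M f g) = Dom M f"
  using pair_universal by (auto simp: hom_def)
lemma pair_Cod [simp]:
  "f \<in> Ar M \<Longrightarrow> g \<in> Ar M \<Longrightarrow> Dom M f = Dom M g \<Longrightarrow> Cod M (pair M f g) = prd M (Cod M f) (Cod M g)"
  using pair_universal by (auto simp: hom_def)

lemma pr1_pair [simp]:
  "f \<in> Ar M \<Longrightarrow> g \<in> Ar M \<Longrightarrow> Dom M f = Dom M g \<Longrightarrow> Cod M f = A \<Longrightarrow> Cod M g = B \<Longrightarrow>
   pr1 M A B \<cdot> pair M f g = f"
  using pair_universal by auto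
lemma pr2_pair [simp]:
  "f \<in> Ar M \<Longrightarrow> g \<in> Ar M \<Longrightarrow> Dom M f = Dom M g \<Longrightarrow> Cod M f = A \<Longrightarrow> Cod M g = B \<Longrightarrow>
   pr2 M A B \<cdot> pair M f g = g"
  using pair_universal by auto

lemma pr1_pair_comp [simp]:
  "f \<in> Ar M \<Longrightarrow> g \<in> Ar M \<Longrightarrow> Dom M f = Dom M g \<Longrightarrow> Cod M f = A \<Longrightarrow> Cod M g = B \<Longrightarrow>
   r \<in> Ar M \<Longrightarrow> Cod M r = Dom M f \<Longrightarrow> pr1 M A B \<cdot> (pair M f g \<cdot> r) = f \<cdot> r"
  by (rule comp_reassoc[OF pr1_pair]) auto
lemma pr2_pair_comp [simp]:
  "f \<in> Ar M \<Longrightarrow> g \<in> Ar M \<Longrightarrow> Dom M f = Dom M g \<Longrightarrow> Cod M f = A \<Longrightarrow> Cod M g = B \<Longrightarrow>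
   r \<in> Ar M \<Longrightarrow> Cod M r = Dom M f \<Longrightarrow> pr2 M A B \<cdot> (pair M f g \<cdot> r) = g \<cdot> r"
  by (rule comp_reassoc[OF pr2_pair]) auto

lemma pair_eta:
  assumes h: "h \<in> Ar M" "Cod M h = prd M A B" and AB: "A \<in> Ob M" "B \<in> Ob M"
  shows "pair M (pr1 M A B \<cdot> h) (pr2 M A B \<cdot> h) = h"
proof -
  have "\<forall>Z\<in>Ob M. \<forall>f\<in>hom M Z A. \<forall>g\<in>hom M Z B. \<forall>k\<in>hom M Z (prd M A B).
      pr1 M A B \<cdot> k = f \<and> pr2 M A B \<cdot> k = g \<longrightarrow> k = pair M f g"
    using cartesian AB unfolding is_cartesian_def by blast
  from this[rule_format, of "Dom M h" "pr1 M A B \<cdot> h" "pr2 M A B \<cdot> h" h] show ?thesis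
    using h AB by (simp add: hom_def)
qed

lemma to_prd_eqI:
  "h \<in> Ar M \<Longrightarrow> k \<in> Ar M \<Longrightarrow> Cod M h = prd M A B \<Longrightarrow> Cod M k = prd M A B \<Longrightarrow> A \<in> Ob M \<Longrightarrow> B \<in> Ob M \<Longrightarrow>
   pr1 M A B \<cdot> h = pr1 M A B \<cdot> k \<Longrightarrow> pr2 M A B \<cdot> h = pr2 M A B \<cdot> k \<Longrightarrow> h = k"
  by (metis pair_eta)

lemma pair_comp:
  "f \<in> Ar M \<Longrightarrow> g \<in> Ar M \<Longrightarrow> Dom M f = Dom M g \<Longrightarrow> h \<in> Ar M \<Longrightarrow> Cod M h = Dom M f \<Longrightarrow>
   pair M f g \<cdot> h = pair M (f \<cdot> h) (g \<cdot> h)"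
  by (rule to_prd_eqI[of _ _ "Cod M f" "Cod M g"]) simp_all

lemma tens_Ar [simp]: "f \<in> Ar M \<Longrightarrow> g \<in> Ar M \<Longrightarrow> tens M f g \<in> Ar M"
  unfolding tens_def by simp
lemma tens_Dom [simp]: "f \<in> Ar M \<Longrightarrow> g \<in> Ar M \<Longrightarrow> Dom M (tens M f g) = prd M (Dom M f) (Dom M g)"
  unfolding tens_def by simp
lemma tens_Cod [simp]: "f \<in> Ar M \<Longrightarrow> g \<in> Ar M \<Longrightarrow> Cod M (tens M f g) = prd M (Cod M f) (Cod M g)"
  unfolding tens_def by simp

lemma pr1_tens [simp]:
  "f \<in> Ar M \<Longrightarrow> g \<in> Ar M \<Longrightarrow> Cod M f = A \<Longrightarrow> Cod M g = B \<Longrightarrow>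
   pr1 M A B \<cdot> tens M f g = f \<cdot> pr1 M (Dom M f) (Dom M g)"
  unfolding tens_def by simp
lemma pr2_tens [simp]:
  "f \<in> Ar M \<Longrightarrow> g \<in> Ar M \<Longrightarrow> Cod M f = A \<Longrightarrow> Cod M g = B \<Longrightarrow>
   pr2 M A B \<cdot> tens M f g = g \<cdot> pr2 M (Dom M f) (Dom M g)"
  unfolding tens_def by simp

lemma pr1_tens_comp [simp]:
  "f \<in> Ar M \<Longrightarrow> g \<in> Ar M \<Longrightarrow> Cod M f = A \<Longrightarrow> Cod M g = B \<Longrightarrow>
   r \<in> Ar M \<Longrightarrow> Cod M r = prd M (Dom M f) (Dom M g) \<Longrightarrow>
   pr1 M A B \<cdot> (tens M f g \<cdot> r) = f \<cdot> (pr1 M (Dom M f) (Dom M g) \<cdot> r)"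
  using Cod_Ob[of f] Cod_Ob[of g] by (subst comp_reassoc[OF pr1_tens]) simp_all
lemma pr2_tens_comp [simp]:
  "f \<in> Ar M \<Longrightarrow> g \<in> Ar M \<Longrightarrow> Cod M f = A \<Longrightarrow> Cod M g = B \<Longrightarrow>
   r \<in> Ar M \<Longrightarrow> Cod M r = prd M (Dom M f) (Dom M g) \<Longrightarrow>
   pr2 M A B \<cdot> (tens M f g \<cdot> r) = g \<cdot> (pr2 M (Dom M f) (Dom M g) \<cdot> r)"
  using Cod_Ob[of f] Cod_Ob[of g] by (subst comp_reassoc[OF pr2_tens]) simp_all

lemma tens_pair:
  "f \<in> Ar M \<Longrightarrow> g \<in> Ar M \<Longrightarrow> a \<in> Ar M \<Longrightarrow> b \<in> Ar M \<Longrightarrow> Dom M a = Dom M b \<Longrightarrow>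
   Cod M a = Dom M f \<Longrightarrow> Cod M b = Dom M g \<Longrightarrow> tens M f g \<cdot> pair M a b = pair M (f \<cdot> a) (g \<cdot> b)"
  by (rule to_prd_eqI[of _ _ "Cod M f" "Cod M g"]) simp_all

lemma assoc_Ar [simp]: "A \<in> Ob M \<Longrightarrow> B \<in> Ob M \<Longrightarrow> C \<in> Ob M \<Longrightarrow> assoc M A B C \<in> Ar M"
  unfolding assoc_def by simp
lemma assoc_Dom [simp]:
  "A \<in> Ob M \<Longrightarrow> B \<in> Ob M \<Longrightarrow> C \<in> Ob M \<Longrightarrow> Dom M (assoc M A B C) = prd M (prd M A B) C"
  unfolding assoc_def by simp
lemma assoc_Cod [simp]:
  "A \<in> Ob M \<Longrightarrow> B \<in> Ob M \<Longrightarrow> C \<in> Ob M \<Longrightarrow> Cod M (assoc M A B C) = prd M A (prd M B C)"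
  unfolding assoc_def by simp

lemma pr1_assoc:
  "A \<in> Ob M \<Longrightarrow> B \<in> Ob M \<Longrightarrow> C \<in> Ob M \<Longrightarrow> r \<in> Ar M \<Longrightarrow> Cod M r = prd M (prd M A B) C \<Longrightarrow>
   pr1 M A (prd M B C) \<cdot> (assoc M A B C \<cdot> r) = pr1 M A B \<cdot> (pr1 M (prd M A B) C \<cdot> r)"
  unfolding assoc_def by simp
lemma pr12_assoc:
  "A \<in> Ob M \<Longrightarrow> B \<in> Ob M \<Longrightarrow> C \<in> Ob M \<Longrightarrow> r \<in> Ar M \<Longrightarrow> Cod M r = prd M (prd M A B) C \<Longrightarrow>
   pr1 M B C \<cdot> (pr2 M A (prd M B C) \<cdot> (assoc M A B C \<cdot> r)) = pr2 M A B \<cdot> (pr1 M (prd M A B) C \<cdot> r)"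
  unfolding assoc_def by simp
lemma pr22_assoc:
  "A \<in> Ob M \<Longrightarrow> B \<in> Ob M \<Longrightarrow> C \<in> Ob M \<Longrightarrow> r \<in> Ar M \<Longrightarrow> Cod M r = prd M (prd M A B) C \<Longrightarrow>
   pr2 M B C \<cdot> (pr2 M A (prd M B C) \<cdot> (assoc M A B C \<cdot> r)) = pr2 M (prd M A B) C \<cdot> r"
  unfolding assoc_def by simp

lemma is_isoI:
  "f \<in> Ar M \<Longrightarrow> g \<in> Ar M \<Longrightarrow> Dom M g = Cod M f \<Longrightarrow> Cod M g = Dom M f \<Longrightarrow>
   g \<cdot> f = Idm M (Dom M f) \<Longrightarrow> f \<cdot> g = Idm M (Cod M f) \<Longrightarrow> is_iso M f"
  unfolding is_iso_def hom_def by blast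

lemma assoc_iso:
  assumes "A \<in> Ob M" "B \<in> Ob M" "C \<in> Ob M"
  shows "is_iso M (assoc M A B C)"
proof (rule is_isoI)
  define inv_assoc where "inv_assoc = pair M (pair M (pr1 M A (prd M B C)) (pr1 M B C \<cdot> pr2 M A (prd M B C)))
    (pr2 M B C \<cdot> pr2 M A (prd M B C))"
  have inv: "inv_assoc \<in> Ar M" "Dom M inv_assoc = prd M A (prd M B C)" "Cod M inv_assoc = prd M (prd M A B) C"
    unfolding inv_assoc_def using assms by simp_all
  then show "inv_assoc \<in> Ar M" "Dom M inv_assoc = Cod M (assoc M A B C)" "Cod M inv_assoc = Dom M (assoc M A B C)"
    using assms by simp_all
  show "inv_assoc \<cdot> assoc M A B C = Idm M (Dom M (assoc M A B C))"
  proof (rule to_prd_eqI[of _ _ "prd M A B" C])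
    show "pr1 M (prd M A B) C \<cdot> (inv_assoc \<cdot> assoc M A B C) = pr1 M (prd M A B) C \<cdot> Idm M (Dom M (assoc M A B C))"
      by (rule to_prd_eqI[of _ _ A B])
        (use assms in \<open>simp_all add: inv_assoc_def assoc_def\<close>)
  qed (use assms inv in \<open>simp_all add: inv_assoc_def assoc_def\<close>)
  show "assoc M A B C \<cdot> inv_assoc = Idm M (Cod M (assoc M A B C))"
  proof (rule to_prd_eqI[of _ _ A "prd M B C"])
    show "pr2 M A (prd M B C) \<cdot> (assoc M A B C \<cdot> inv_assoc) = pr2 M A (prd M B C) \<cdot> Idm M (Cod M (assoc M A B C))"
      by (rule to_prd_eqI[of _ _ B C])
        (use assms inv in \<open>simp_all add: pr12_assoc pr22_assoc, simp_all add: inv_assoc_def\<close>)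
  qed (use assms inv in \<open>simp_all add: pr1_assoc, simp_all add: inv_assoc_def\<close>)
qed (use assms in simp)

lemma pair_Idm_bang_iso:
  assumes A: "A \<in> Ob M"
  shows "is_iso M (pair M (Idm M A) (bang M A))"
proof (rule is_isoI[where g = "pr1 M A (one M)"])
  show "pair M (Idm M A) (bang M A) \<cdot> pr1 M A (one M) = Idm M (Cod M (pair M (Idm M A) (bang M A)))"
  proof (rule to_prd_eqI[of _ _ A "one M"])
    show "pr2 M A (one M) \<cdot> (pair M (Idm M A) (bang M A) \<cdot> pr1 M A (one M))
      = pr2 M A (one M) \<cdot> Idm M (Cod M (pair M (Idm M A) (bang M A)))"
      using A bang_unique[of "pr2 M A (one M)"] by (simp add: bang_comp)
  qed (use A in simp_all)
qed (use A in simp_all)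

lemma Eqv_Ar: "f \<in> Eqv M \<Longrightarrow> f \<in> Ar M"
  using eqv unfolding cartesian_with_equivalences_def by auto
lemma iso_Eqv: "is_iso M f \<Longrightarrow> f \<in> Eqv M"
  using eqv unfolding cartesian_with_equivalences_def by auto
lemma Eqv_comp: "f \<in> Eqv M \<Longrightarrow> g \<in> Eqv M \<Longrightarrow> Cod M f = Dom M g \<Longrightarrow> g \<cdot> f \<in> Eqv M"
  using eqv Eqv_Ar unfolding cartesian_with_equivalences_def by blast
lemma Eqv_cancel_left:
  "f \<in> Ar M \<Longrightarrow> g \<in> Eqv M \<Longrightarrow> Cod M f = Dom M g \<Longrightarrow> g \<cdot> f \<in> Eqv M \<Longrightarrow> f \<in> Eqv M"
  using eqv Eqv_Ar unfolding cartesian_with_equivalences_def by blast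
lemma Eqv_tens: "f \<in> Eqv M \<Longrightarrow> g \<in> Eqv M \<Longrightarrow> tens M f g \<in> Eqv M"
  using eqv unfolding cartesian_with_equivalences_def by blast
lemma Idm_Eqv: "A \<in> Ob M \<Longrightarrow> Idm M A \<in> Eqv M"
  by (rule iso_Eqv, rule is_isoI[where g = "Idm M A"]) simp_all

lemma tupl_hom:
  "Z \<in> Ob M \<Longrightarrow> A \<in> Ob M \<Longrightarrow> (\<And>j. j < k \<Longrightarrow> g j \<in> Ar M \<and> Dom M (g j) = Z \<and> Cod M (g j) = A) \<Longrightarrow>
   tupl M Z g k \<in> Ar M \<and> Dom M (tupl M Z g k) = Z \<and> Cod M (tupl M Z g k) = pw M A k"
  by (induction k) auto

lemma tupl_cong: "(\<And>j. j < k \<Longrightarrow> g j = g' j) \<Longrightarrow> tupl M Z g k = tupl M Z g' k"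
  by (induction k) auto

lemma tupl_comp:
  "Z \<in> Ob M \<Longrightarrow> A \<in> Ob M \<Longrightarrow> (\<And>j. j < k \<Longrightarrow> g j \<in> Ar M \<and> Dom M (g j) = Z \<and> Cod M (g j) = A) \<Longrightarrow>
   h \<in> Ar M \<Longrightarrow> Cod M h = Z \<Longrightarrow> tupl M Z g k \<cdot> h = tupl M (Dom M h) (\<lambda>j. g j \<cdot> h) k"
proof (induction k)
  case 0 then show ?case by (simp add: bang_comp)
next
  case (Suc k)
  then show ?case using tupl_hom[of Z A k g] by (simp add: pair_comp)
qed

end

section \<open>Simplicial objects and the Segal condition\<close>

definition is_simplicial :: "('o,'a) cmc \<Rightarrow> ('o,'a) simpobj \<Rightarrow> bool" where
  "is_simplicial M Y \<longleftrightarrow>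
     (\<forall>n. sob Y n \<in> Ob M) \<and>
     (\<forall>m n l. deltap_mor (m, n, l) \<longrightarrow> sar Y (m, n, l) \<in> hom M (sob Y n) (sob Y m)) \<and>
     (\<forall>t. \<not> deltap_mor t \<longrightarrow> sar Y t = undefined) \<and>
     (\<forall>n. sar Y (deltap_id n) = Idm M (sob Y n)) \<and>
     (\<forall>f g. deltap_mor f \<and> deltap_mor g \<and> fst (snd f) = fst g \<longrightarrow>
        sar Y (scomp g f) = Comp M (sar Y f) (sar Y g))"

definition segal_map :: "('o,'a) cmc \<Rightarrow> ('o,'a) simpobj \<Rightarrow> nat \<Rightarrow> 'a" where
  "segal_map M Y n = tupl M (sob Y n) (\<lambda>j. sar Y (beta n j)) n"

lemma is_special_iff: "is_special M Y \<longleftrightarrow> is_simplicial M Y \<and> (\<forall>n. segal_map M Y n \<in> Eqv M)"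
  unfolding is_special_def is_simplicial_def segal_map_def by blast

definition split_map :: "('o,'a) cmc \<Rightarrow> ('o,'a) simpobj \<Rightarrow> nat \<Rightarrow> nat \<Rightarrow> 'a" where
  "split_map M Y m n = pair M (sar Y (alpha1 m n)) (sar Y (alpha2 m n))"

locale simplicial = cartesian_eqv +
  fixes Y
  assumes simplicial: "is_simplicial M Y"
begin

lemma sob_Ob [simp]: "sob Y n \<in> Ob M"
  using simplicial unfolding is_simplicial_def by auto

lemma sar_hom: "deltap_mor t \<Longrightarrow> sar Y t \<in> hom M (sob Y (fst (snd t))) (sob Y (fst t))"
  using simplicial unfolding is_simplicial_def by (cases t) auto

lemma sar_Ar [simp]: "deltap_mor t \<Longrightarrow> sar Y t \<in> Ar M"
  using sar_hom by (auto simp: hom_def)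
lemma sar_Dom [simp]: "deltap_mor t \<Longrightarrow> Dom M (sar Y t) = sob Y (fst (snd t))"
  using sar_hom by (auto simp: hom_def)
lemma sar_Cod [simp]: "deltap_mor t \<Longrightarrow> Cod M (sar Y t) = sob Y (fst t)"
  using sar_hom by (auto simp: hom_def)

lemma sar_undefined: "\<not> deltap_mor t \<Longrightarrow> sar Y t = undefined"
  using simplicial unfolding is_simplicial_def by blast

lemma sar_deltap_id [simp]: "sar Y (deltap_id n) = Idm M (sob Y n)"
  using simplicial unfolding is_simplicial_def by blast

lemma sar_scomp:
  "deltap_mor f \<Longrightarrow> deltap_mor g \<Longrightarrow> fst (snd f) = fst g \<Longrightarrow> sar Y (scomp g f) = sar Y f \<cdot> sar Y g"
  using simplicial unfolding is_simplicial_def by blast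

lemma sar_alpha1_alpha1: "sar Y (alpha1 l m) \<cdot> sar Y (alpha1 (l + m) n) = sar Y (alpha1 l (m + n))"
  using sar_scomp[of "alpha1 l m" "alpha1 (l + m) n"] by (simp add: alpha1_alpha1)

lemma sar_alpha2_alpha1:
  "sar Y (alpha2 l m) \<cdot> sar Y (alpha1 (l + m) n) = sar Y (alpha1 m n) \<cdot> sar Y (alpha2 l (m + n))"
  using sar_scomp[of "alpha2 l m" "alpha1 (l + m) n"] sar_scomp[of "alpha1 m n" "alpha2 l (m + n)"]
  by (simp add: alpha1_alpha2)

lemma sar_alpha2_alpha2: "sar Y (alpha2 m n) \<cdot> sar Y (alpha2 l (m + n)) = sar Y (alpha2 (l + m) n)"
  using sar_scomp[of "alpha2 m n" "alpha2 l (m + n)"] by (simp add: alpha2_alpha2)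

lemma sar_alpha1_natural:
  assumes "delta_mor f" "delta_mor g"
  shows "sar Y (delta_dual f) \<cdot> sar Y (alpha1 (fst f) (fst g))
    = sar Y (alpha1 (fst (snd f)) (fst (snd g))) \<cdot> sar Y (delta_dual (dsum f g))"
  using sar_scomp[of "delta_dual f" "alpha1 (fst f) (fst g)"]
    sar_scomp[of "alpha1 (fst (snd f)) (fst (snd g))" "delta_dual (dsum f g)"]
  by (simp add: assms alpha1_natural)

lemma sar_alpha2_natural:
  assumes "delta_mor f" "delta_mor g"
  shows "sar Y (delta_dual g) \<cdot> sar Y (alpha2 (fst f) (fst g))
    = sar Y (alpha2 (fst (snd f)) (fst (snd g))) \<cdot> sar Y (delta_dual (dsum f g))"
  using sar_scomp[of "delta_dual g" "alpha2 (fst f) (fst g)"]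
    sar_scomp[of "alpha2 (fst (snd f)) (fst (snd g))" "delta_dual (dsum f g)"]
  by (simp add: assms alpha2_natural)

lemma split_map_Ar [simp]: "split_map M Y m n \<in> Ar M"
  and split_map_Dom [simp]: "Dom M (split_map M Y m n) = sob Y (m + n)"
  and split_map_Cod [simp]: "Cod M (split_map M Y m n) = prd M (sob Y m) (sob Y n)"
  unfolding split_map_def by simp_all

lemma pr1_split_map [simp]: "pr1 M (sob Y m) (sob Y n) \<cdot> split_map M Y m n = sar Y (alpha1 m n)"
  and pr2_split_map [simp]: "pr2 M (sob Y m) (sob Y n) \<cdot> split_map M Y m n = sar Y (alpha2 m n)"
  unfolding split_map_def by simp_all

lemma split_map_natural:
  assumes "delta_mor f" "delta_mor g"
  shows "tens M (sar Y (delta_dual f)) (sar Y (delta_dual g)) \<cdot> split_map M Y (fst f) (fst g)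
    = split_map M Y (fst (snd f)) (fst (snd g)) \<cdot> sar Y (delta_dual (dsum f g))"
  by (rule to_prd_eqI[of _ _ "sob Y (fst (snd f))" "sob Y (fst (snd g))"])
    (use assms in \<open>simp_all add: split_map_def sar_alpha1_natural sar_alpha2_natural\<close>)

lemma split_map_coassoc:
  "assoc M (sob Y l) (sob Y m) (sob Y n) \<cdot> (tens M (split_map M Y l m) (Idm M (sob Y n)) \<cdot> split_map M Y (l + m) n)
   = tens M (Idm M (sob Y l)) (split_map M Y m n) \<cdot> split_map M Y l (m + n)"
proof (rule to_prd_eqI[of _ _ "sob Y l" "prd M (sob Y m) (sob Y n)"])
  show "pr2 M (sob Y l) (prd M (sob Y m) (sob Y n)) \<cdot>
      (assoc M (sob Y l) (sob Y m) (sob Y n) \<cdot> (tens M (split_map M Y l m) (Idm M (sob Y n)) \<cdot> split_map M Y (l + m) n))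
    = pr2 M (sob Y l) (prd M (sob Y m) (sob Y n)) \<cdot> (tens M (Idm M (sob Y l)) (split_map M Y m n) \<cdot> split_map M Y l (m + n))"
    by (rule to_prd_eqI[of _ _ "sob Y m" "sob Y n"])
      (simp_all add: split_map_def pr12_assoc pr22_assoc sar_alpha2_alpha1 sar_alpha2_alpha2 add.assoc)
qed (simp_all add: split_map_def pr1_assoc sar_alpha1_alpha1 add.assoc)

lemma segal_map_hom:
  "segal_map M Y k \<in> Ar M \<and> Dom M (segal_map M Y k) = sob Y k \<and> Cod M (segal_map M Y k) = pw M (sob Y 1) k"
  unfolding segal_map_def by (rule tupl_hom) (auto simp: deltap_mor_beta)

lemma segal_map_Suc:
  "segal_map M Y (Suc k) = tens M (segal_map M Y k) (Idm M (sob Y 1)) \<cdot> split_map M Y k 1"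
proof -
  have "tens M (segal_map M Y k) (Idm M (sob Y 1)) \<cdot> split_map M Y k 1
      = pair M (segal_map M Y k \<cdot> sar Y (alpha1 k 1)) (sar Y (alpha2 k 1))"
    using segal_map_hom[of k] unfolding split_map_def by (subst tens_pair) simp_all
  also have "segal_map M Y k \<cdot> sar Y (alpha1 k 1)
      = tupl M (sob Y (Suc k)) (\<lambda>j. sar Y (beta k j) \<cdot> sar Y (alpha1 k 1)) k"
    unfolding segal_map_def by (subst tupl_comp[where A = "sob Y 1"]) (auto simp: deltap_mor_beta)
  also have "\<dots> = tupl M (sob Y (Suc k)) (\<lambda>j. sar Y (beta (Suc k) j)) k"
  proof (rule tupl_cong)
    fix j assume "j < k"
    then show "sar Y (beta k j) \<cdot> sar Y (alpha1 k 1) = sar Y (beta (Suc k) j)"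
      using sar_scomp[of "beta k j" "alpha1 k 1"] alpha1_beta[of j k] by (simp add: deltap_mor_beta)
  qed
  finally show ?thesis
    by (simp add: segal_map_def alpha2_eq_beta[unfolded One_nat_def])
qed

end

definition htymon_of :: "('o,'a) cmc \<Rightarrow> ('o,'a) simpobj \<Rightarrow> ('o,'a) colax" where
  "htymon_of M Y = \<lparr> hob = sob Y, har = (\<lambda>t. if delta_mor t then sar Y (delta_dual t) else undefined),
     xi = split_map M Y, xi0 = bang M (sob Y 0) \<rparr>"

lemma hob_htymon_of [simp]: "hob (htymon_of M Y) = sob Y"
  and xi_htymon_of [simp]: "xi (htymon_of M Y) = split_map M Y"
  and xi0_htymon_of [simp]: "xi0 (htymon_of M Y) = bang M (sob Y 0)"
  unfolding htymon_of_def by simp_all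

lemma har_htymon_of [simp]: "delta_mor t \<Longrightarrow> har (htymon_of M Y) t = sar Y (delta_dual t)"
  unfolding htymon_of_def by simp

locale special = cartesian_eqv +
  fixes Y
  assumes special: "is_special M Y"

sublocale special \<subseteq> simplicial
  using special unfolding is_special_iff by unfold_locales blast

context special
begin

lemma segal_map_Eqv: "segal_map M Y n \<in> Eqv M"
  using special unfolding is_special_iff by blast

lemma split_map_1_Eqv: "split_map M Y k 1 \<in> Eqv M"
proof (rule Eqv_cancel_left)
  show "tens M (segal_map M Y k) (Idm M (sob Y 1)) \<in> Eqv M"
    by (simp add: Eqv_tens segal_map_Eqv Idm_Eqv)
  show "tens M (segal_map M Y k) (Idm M (sob Y 1)) \<cdot> split_map M Y k 1 \<in> Eqv M"
    using segal_map_Eqv[of "Suc k"] by (simp add: segal_map_Suc)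
qed (use segal_map_hom[of k] in simp_all)

lemma split_map_0_Eqv: "split_map M Y k 0 \<in> Eqv M"
proof (rule Eqv_cancel_left)
  have "bang M (sob Y 0) \<in> Eqv M"
    using segal_map_Eqv[of 0] by (simp add: segal_map_def)
  then show "tens M (Idm M (sob Y k)) (bang M (sob Y 0)) \<in> Eqv M"
    by (simp add: Eqv_tens Idm_Eqv)
  have "tens M (Idm M (sob Y k)) (bang M (sob Y 0)) \<cdot> split_map M Y k 0 = pair M (Idm M (sob Y k)) (bang M (sob Y k))"
    unfolding split_map_def by (subst tens_pair) (simp_all add: bang_comp)
  then show "tens M (Idm M (sob Y k)) (bang M (sob Y 0)) \<cdot> split_map M Y k 0 \<in> Eqv M"
    by (simp add: iso_Eqv pair_Idm_bang_iso)
qed simp_all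

lemma split_map_Eqv: "split_map M Y m n \<in> Eqv M"
proof (induction n)
  case 0
  show ?case by (rule split_map_0_Eqv)
next
  case (Suc n)
  have "tens M (split_map M Y m n) (Idm M (sob Y 1)) \<cdot> split_map M Y (m + n) 1 \<in> Eqv M"
    by (rule Eqv_comp[OF split_map_1_Eqv Eqv_tens[OF Suc.IH Idm_Eqv]]) simp_all
  then have "assoc M (sob Y m) (sob Y n) (sob Y 1) \<cdot>
      (tens M (split_map M Y m n) (Idm M (sob Y 1)) \<cdot> split_map M Y (m + n) 1) \<in> Eqv M"
    by (rule Eqv_comp[OF _ iso_Eqv[OF assoc_iso]]) simp_all
  then have comp_Eqv: "tens M (Idm M (sob Y m)) (split_map M Y n 1) \<cdot> split_map M Y m (n + 1) \<in> Eqv M"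
    by (simp only: split_map_coassoc)
  have tens_Eqv: "tens M (Idm M (sob Y m)) (split_map M Y n 1) \<in> Eqv M"
    by (rule Eqv_tens[OF Idm_Eqv split_map_1_Eqv]) simp
  have "split_map M Y m (n + 1) \<in> Eqv M"
    by (rule Eqv_cancel_left[OF _ tens_Eqv _ comp_Eqv]) simp_all
  then show ?case by simp
qed

lemma htymon_of_htymon: "is_htymon M (htymon_of M Y)"
  unfolding is_htymon_def
proof (intro conjI allI impI)
  fix m n l assume "delta_mor (m, n, l)"
  then show "har (htymon_of M Y) (m, n, l) \<in> hom M (hob (htymon_of M Y) m) (hob (htymon_of M Y) n)"
    by (simp add: hom_def)
next
  fix t assume "\<not> delta_mor t"
  then show "har (htymon_of M Y) t = undefined" unfolding htymon_of_def by simp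
next
  fix f g :: smor
  assume "delta_mor f \<and> delta_mor g \<and> fst (snd f) = fst g"
  then show "har (htymon_of M Y) (scomp g f) = har (htymon_of M Y) g \<cdot> har (htymon_of M Y) f"
    using sar_scomp[of "delta_dual g" "delta_dual f"] by (simp add: delta_dual_scomp)
next
  fix f g :: smor
  assume "delta_mor f \<and> delta_mor g"
  then show "tens M (har (htymon_of M Y) f) (har (htymon_of M Y) g) \<cdot> xi (htymon_of M Y) (fst f) (fst g) =
      xi (htymon_of M Y) (fst (snd f)) (fst (snd g)) \<cdot> har (htymon_of M Y) (dsum f g)"
    by (simp add: split_map_natural)
next
  fix l m n
  show "assoc M (hob (htymon_of M Y) l) (hob (htymon_of M Y) m) (hob (htymon_of M Y) n) \<cdot>
      (tens M (xi (htymon_of M Y) l m) (Idm M (hob (htymon_of M Y) n)) \<cdot> xi (htymon_of M Y) (l + m) n) =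
    tens M (Idm M (hob (htymon_of M Y) l)) (xi (htymon_of M Y) m n) \<cdot> xi (htymon_of M Y) l (m + n)"
    by (simp add: split_map_coassoc)
next
  show "xi0 (htymon_of M Y) \<in> Eqv M"
    using segal_map_Eqv[of 0] by (simp add: segal_map_def)
qed (simp_all add: hom_def split_map_Eqv)

end

section \<open>Homotopy monoids and their middle projections\<close>

definition xi_left :: "('o,'a) cmc \<Rightarrow> ('o,'a) colax \<Rightarrow> nat \<Rightarrow> nat \<Rightarrow> 'a" where
  "xi_left M X a b = Comp M (pr1 M (hob X a) (hob X b)) (xi X a b)"

definition xi_right :: "('o,'a) cmc \<Rightarrow> ('o,'a) colax \<Rightarrow> nat \<Rightarrow> nat \<Rightarrow> 'a" where
  "xi_right M X a b = Comp M (pr2 M (hob X a) (hob X b)) (xi X a b)"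

definition xi_mid :: "('o,'a) cmc \<Rightarrow> ('o,'a) colax \<Rightarrow> nat \<Rightarrow> nat \<Rightarrow> nat \<Rightarrow> 'a" where
  "xi_mid M X a k c = Comp M (xi_left M X k c) (xi_right M X a (k + c))"

locale homotopy_monoid = cartesian_eqv +
  fixes X
  assumes htymon: "is_htymon M X"
begin

lemma hob_Ob [simp]: "hob X n \<in> Ob M"
  using htymon unfolding is_htymon_def by auto

lemma har_hom: "delta_mor t \<Longrightarrow> har X t \<in> hom M (hob X (fst t)) (hob X (fst (snd t)))"
  using htymon unfolding is_htymon_def by (cases t) auto

lemma har_Ar [simp]: "delta_mor t \<Longrightarrow> har X t \<in> Ar M"
  using har_hom by (auto simp: hom_def)
lemma har_Dom [simp]: "delta_mor t \<Longrightarrow> Dom M (har X t) = hob X (fst t)"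
  using har_hom by (auto simp: hom_def)
lemma har_Cod [simp]: "delta_mor t \<Longrightarrow> Cod M (har X t) = hob X (fst (snd t))"
  using har_hom by (auto simp: hom_def)

lemma har_undefined: "\<not> delta_mor t \<Longrightarrow> har X t = undefined"
  using htymon unfolding is_htymon_def by blast

lemma har_delta_id [simp]: "har X (delta_id n) = Idm M (hob X n)"
  using htymon unfolding is_htymon_def by auto

lemma har_scomp:
  "delta_mor f \<Longrightarrow> delta_mor g \<Longrightarrow> fst (snd f) = fst g \<Longrightarrow> har X (scomp g f) = har X g \<cdot> har X f"
  using htymon unfolding is_htymon_def by blast

lemma xi_Ar [simp]: "xi X a b \<in> Ar M"
  using htymon unfolding is_htymon_def hom_def by auto
lemma xi_Dom [simp]: "Dom M (xi X a b) = hob X (a + b)"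
  using htymon unfolding is_htymon_def hom_def by auto
lemma xi_Cod [simp]: "Cod M (xi X a b) = prd M (hob X a) (hob X b)"
  using htymon unfolding is_htymon_def hom_def by auto

lemma xi0_eq_bang: "xi0 X = bang M (hob X 0)"
  using htymon bang_unique[of "xi0 X"] unfolding is_htymon_def hom_def by auto

lemma xi_natural:
  "delta_mor f \<Longrightarrow> delta_mor g \<Longrightarrow>
   tens M (har X f) (har X g) \<cdot> xi X (fst f) (fst g) = xi X (fst (snd f)) (fst (snd g)) \<cdot> har X (dsum f g)"
  using htymon unfolding is_htymon_def by blast

lemma xi_coassoc:
  "assoc M (hob X l) (hob X m) (hob X n) \<cdot> (tens M (xi X l m) (Idm M (hob X n)) \<cdot> xi X (l + m) n) =
   tens M (Idm M (hob X l)) (xi X m n) \<cdot> xi X l (m + n)"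
  using htymon unfolding is_htymon_def by blast

lemma xi_counit_left:
  "pr2 M (one M) (hob X n) \<cdot> (tens M (xi0 X) (Idm M (hob X n)) \<cdot> xi X 0 n) = Idm M (hob X n)"
  using htymon unfolding is_htymon_def by blast

lemma xi_counit_right:
  "pr1 M (hob X n) (one M) \<cdot> (tens M (Idm M (hob X n)) (xi0 X) \<cdot> xi X n 0) = Idm M (hob X n)"
  using htymon unfolding is_htymon_def by blast

lemma xi_Eqv: "xi X m n \<in> Eqv M"
  using htymon unfolding is_htymon_def by auto

lemma xi0_Eqv: "xi0 X \<in> Eqv M"
  using htymon unfolding is_htymon_def by auto

lemma xi_left_Ar [simp]: "xi_left M X a b \<in> Ar M"
  and xi_left_Dom [simp]: "Dom M (xi_left M X a b) = hob X (a + b)"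
  and xi_left_Cod [simp]: "Cod M (xi_left M X a b) = hob X a"
  unfolding xi_left_def by simp_all

lemma xi_right_Ar [simp]: "xi_right M X a b \<in> Ar M"
  and xi_right_Dom [simp]: "Dom M (xi_right M X a b) = hob X (a + b)"
  and xi_right_Cod [simp]: "Cod M (xi_right M X a b) = hob X b"
  unfolding xi_right_def by simp_all

lemma xi_mid_Ar [simp]: "xi_mid M X a k c \<in> Ar M"
  and xi_mid_Dom [simp]: "Dom M (xi_mid M X a k c) = hob X (a + (k + c))"
  and xi_mid_Cod [simp]: "Cod M (xi_mid M X a k c) = hob X k"
  unfolding xi_mid_def by simp_all

lemma pair_xi_left_xi_right: "pair M (xi_left M X m n) (xi_right M X m n) = xi X m n"
  unfolding xi_left_def xi_right_def by (rule pair_eta) simp_all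

lemma xi_left_natural:
  "delta_mor f \<Longrightarrow> delta_mor g \<Longrightarrow>
   xi_left M X (fst (snd f)) (fst (snd g)) \<cdot> har X (dsum f g) = har X f \<cdot> xi_left M X (fst f) (fst g)"
  unfolding xi_left_def by (simp add: xi_natural[symmetric])

lemma xi_right_natural:
  "delta_mor f \<Longrightarrow> delta_mor g \<Longrightarrow>
   xi_right M X (fst (snd f)) (fst (snd g)) \<cdot> har X (dsum f g) = har X g \<cdot> xi_right M X (fst f) (fst g)"
  unfolding xi_right_def by (simp add: xi_natural[symmetric])

lemma xi_left_0 [simp]: "xi_left M X n 0 = Idm M (hob X n)"
  using xi_counit_right[of n] unfolding xi_left_def by (simp add: xi0_eq_bang)

lemma xi_right_0 [simp]: "xi_right M X 0 n = Idm M (hob X n)"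
  using xi_counit_left[of n] unfolding xi_right_def by (simp add: xi0_eq_bang)

lemma xi_left_xi_left: "xi_left M X l m \<cdot> xi_left M X (l + m) n = xi_left M X l (m + n)"
proof -
  have "xi_left M X l m \<cdot> xi_left M X (l + m) n = pr1 M (hob X l) (prd M (hob X m) (hob X n)) \<cdot>
      (assoc M (hob X l) (hob X m) (hob X n) \<cdot> (tens M (xi X l m) (Idm M (hob X n)) \<cdot> xi X (l + m) n))"
    unfolding xi_left_def by (simp add: pr1_assoc)
  also have "\<dots> = xi_left M X l (m + n)"
    unfolding xi_coassoc xi_left_def by simp
  finally show ?thesis .
qed

lemma xi_right_xi_left:
  "xi_right M X l m \<cdot> xi_left M X (l + m) n = xi_left M X m n \<cdot> xi_right M X l (m + n)"
proof -
  have "xi_right M X l m \<cdot> xi_left M X (l + m) n = pr1 M (hob X m) (hob X n) \<cdot>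
      (pr2 M (hob X l) (prd M (hob X m) (hob X n)) \<cdot>
        (assoc M (hob X l) (hob X m) (hob X n) \<cdot> (tens M (xi X l m) (Idm M (hob X n)) \<cdot> xi X (l + m) n)))"
    unfolding xi_left_def xi_right_def by (simp add: pr12_assoc)
  also have "\<dots> = xi_left M X m n \<cdot> xi_right M X l (m + n)"
    unfolding xi_coassoc xi_left_def xi_right_def by simp
  finally show ?thesis .
qed

lemma xi_right_xi_right: "xi_right M X m n \<cdot> xi_right M X l (m + n) = xi_right M X (l + m) n"
proof -
  have "xi_right M X m n \<cdot> xi_right M X l (m + n) = pr2 M (hob X m) (hob X n) \<cdot>
      (pr2 M (hob X l) (prd M (hob X m) (hob X n)) \<cdot>
        (assoc M (hob X l) (hob X m) (hob X n) \<cdot> (tens M (xi X l m) (Idm M (hob X n)) \<cdot> xi X (l + m) n)))"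
    unfolding xi_coassoc xi_right_def by simp
  also have "\<dots> = xi_right M X (l + m) n"
    unfolding xi_right_def by (simp add: pr22_assoc)
  finally show ?thesis .
qed

lemma xi_mid_natural:
  assumes "delta_mor f" "delta_mor g" "delta_mor h"
  shows "xi_mid M X (fst (snd f)) (fst (snd g)) (fst (snd h)) \<cdot> har X (dsum f (dsum g h))
    = har X g \<cdot> xi_mid M X (fst f) (fst g) (fst h)"
proof -
  have "xi_mid M X (fst (snd f)) (fst (snd g)) (fst (snd h)) \<cdot> har X (dsum f (dsum g h))
     = (xi_left M X (fst (snd g)) (fst (snd h)) \<cdot> har X (dsum g h)) \<cdot> xi_right M X (fst f) (fst g + fst h)"
    using assms xi_right_natural[of f "dsum g h"] unfolding xi_mid_def by simp
  also have "\<dots> = har X g \<cdot> xi_mid M X (fst f) (fst g) (fst h)"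
    using assms unfolding xi_left_natural[OF assms(2,3)] xi_mid_def by simp
  finally show ?thesis .
qed

lemma xi_mid_0 [simp]: "xi_mid M X 0 n 0 = Idm M (hob X n)"
  unfolding xi_mid_def by simp

lemma xi_mid_xi_mid:
  "xi_mid M X a k c \<cdot> xi_mid M X a' (a + (k + c)) c' = xi_mid M X (a' + a) k (c + c')"
proof -
  have "xi_mid M X a k c \<cdot> xi_mid M X a' (a + (k + c)) c'
      = xi_left M X k c \<cdot> (xi_right M X a (k + c) \<cdot> (xi_left M X (a + (k + c)) c' \<cdot>
          xi_right M X a' (a + (k + c) + c')))"
    unfolding xi_mid_def by simp
  also have "\<dots> = xi_left M X k c \<cdot> (xi_left M X (k + c) c' \<cdot> (xi_right M X a (k + c + c') \<cdot>
      xi_right M X a' (a + (k + c) + c')))"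
    by (subst comp_reassoc2[OF xi_right_xi_left]) (simp_all add: add.assoc)
  also have "\<dots> = xi_left M X k (c + c') \<cdot> (xi_right M X a (k + c + c') \<cdot> xi_right M X a' (a + (k + c + c')))"
    by (subst comp_reassoc[OF xi_left_xi_left]) (simp_all add: add.assoc)
  also have "\<dots> = xi_mid M X (a' + a) k (c + c')"
    unfolding xi_mid_def by (simp add: xi_right_xi_right add.assoc)
  finally show ?thesis .
qed

end

definition special_of :: "('o,'a) cmc \<Rightarrow> ('o,'a) colax \<Rightarrow> ('o,'a) simpobj" where
  "special_of M X = \<lparr> sob = hob X,
     sar = (\<lambda>t. if deltap_mor t then Comp M (xi_mid M X 1 (fst t) 1) (har X (deltap_dual t)) else undefined) \<rparr>"

lemma sob_special_of [simp]: "sob (special_of M X) = hob X"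
  unfolding special_of_def by simp

lemma sar_special_of:
  "deltap_mor t \<Longrightarrow> sar (special_of M X) t = Comp M (xi_mid M X 1 (fst t) 1) (har X (deltap_dual t))"
  unfolding special_of_def by simp

context homotopy_monoid
begin

lemma sar_special_of_delta_dual: "delta_mor f \<Longrightarrow> sar (special_of M X) (delta_dual f) = har X f"
  using xi_mid_natural[of "delta_bang 0" f "delta_bang 0"] by (simp add: sar_special_of deltap_dual_delta_dual)

lemma sar_special_of_alpha1: "sar (special_of M X) (alpha1 m n) = xi_left M X m n"
  using xi_mid_natural[of "delta_bang 0" "delta_id m" "delta_bang n"]
  by (simp add: sar_special_of deltap_dual_alpha1 xi_mid_def)

lemma sar_special_of_alpha2: "sar (special_of M X) (alpha2 m n) = xi_right M X m n"
  using xi_mid_natural[of "delta_bang m" "delta_id n" "delta_bang 0"]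
  by (simp add: sar_special_of deltap_dual_alpha2 xi_mid_def)

lemma sar_special_of_scomp:
  assumes f: "deltap_mor f" and g: "deltap_mor g" and fg: "fst (snd f) = fst g"
  shows "sar (special_of M X) (scomp g f) = sar (special_of M X) f \<cdot> sar (special_of M X) g"
proof -
  define m n where "m = fst f" and "n = fst g"
  define D where "D = dsum (delta_id 1) (dsum (deltap_dual f) (delta_id 1))"
  define C where "C = dsum (delta_bang 2) (dsum (delta_id m) (delta_bang 2))"
  have D: "delta_mor D" "fst D = Suc (Suc n)" "fst (snd D) = Suc (Suc (Suc (Suc m)))"
    unfolding D_def m_def n_def using f fg by auto
  have C: "delta_mor C" "fst C = Suc (Suc (Suc (Suc m)))" "fst (snd C) = Suc (Suc m)"
    unfolding C_def by auto
  have "sar (special_of M X) f \<cdot> sar (special_of M X) g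
      = xi_mid M X 1 m 1 \<cdot> (har X (deltap_dual f) \<cdot> (xi_mid M X 1 n 1 \<cdot> har X (deltap_dual g)))"
    using f g fg unfolding m_def n_def by (simp add: sar_special_of)
  also have "\<dots> = xi_mid M X 1 m 1 \<cdot> (xi_mid M X 1 (Suc (Suc m)) 1 \<cdot> (har X D \<cdot> har X (deltap_dual g)))"
  proof -
    have "har X (deltap_dual f) \<cdot> xi_mid M X 1 n 1 = xi_mid M X 1 (Suc (Suc m)) 1 \<cdot> har X D"
      using xi_mid_natural[of "delta_id 1" "deltap_dual f" "delta_id 1"] f fg
      unfolding D_def m_def n_def by simp
    then show ?thesis using f g fg D unfolding m_def n_def by (subst comp_reassoc2) simp_all
  qed
  also have "\<dots> = xi_mid M X 2 m 2 \<cdot> (har X D \<cdot> har X (deltap_dual g))"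
    using xi_mid_xi_mid[of 1 m 1 1 1] D g unfolding m_def n_def
    by (subst comp_reassoc) (simp_all add: numeral_2_eq_2)
  also have "\<dots> = xi_mid M X 1 m 1 \<cdot> (har X C \<cdot> har X (scomp D (deltap_dual g)))"
  proof -
    have "xi_mid M X 1 m 1 \<cdot> har X C = xi_mid M X 2 m 2"
      using xi_mid_natural[of "delta_bang 2" "delta_id m" "delta_bang 2"] unfolding C_def by simp
    then show ?thesis using C D g unfolding m_def n_def
      by (subst comp_reassoc) (simp_all add: har_scomp)
  qed
  also have "\<dots> = sar (special_of M X) (scomp g f)"
    using har_scomp[of "scomp D (deltap_dual g)" C] deltap_dual_scomp[OF f g fg] f g fg C D
    unfolding C_def D_def m_def n_def by (simp add: sar_special_of)
  finally show ?thesis by simp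
qed

lemma special_of_simplicial: "is_simplicial M (special_of M X)"
  unfolding is_simplicial_def
proof (intro conjI allI impI)
  fix n
  show "sar (special_of M X) (deltap_id n) = Idm M (sob (special_of M X) n)"
    using sar_special_of_delta_dual[of "delta_id n"] by simp
next
  fix t assume "\<not> deltap_mor t"
  then show "sar (special_of M X) t = undefined" unfolding special_of_def by simp
next
  fix f g assume "deltap_mor f \<and> deltap_mor g \<and> fst (snd f) = fst g"
  then show "sar (special_of M X) (scomp g f) = sar (special_of M X) f \<cdot> sar (special_of M X) g"
    by (simp add: sar_special_of_scomp)
qed (simp_all add: hom_def sar_special_of)

lemma split_map_special_of: "split_map M (special_of M X) m n = xi X m n"
  unfolding split_map_def by (simp add: sar_special_of_alpha1 sar_special_of_alpha2 pair_xi_left_xi_right)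

lemma special_of_special: "is_special M (special_of M X)"
proof -
  interpret S: simplicial M "special_of M X"
    by unfold_locales (rule special_of_simplicial)
  have "segal_map M (special_of M X) k \<in> Eqv M" for k
  proof (induction k)
    case 0
    show ?case using xi0_Eqv by (simp add: segal_map_def xi0_eq_bang)
  next
    case (Suc k)
    show ?case
      unfolding S.segal_map_Suc split_map_special_of
      by (rule Eqv_comp[OF xi_Eqv Eqv_tens[OF Suc.IH Idm_Eqv]]) (use S.segal_map_hom[of k] in simp_all)
  qed
  then show ?thesis unfolding is_special_iff using special_of_simplicial by blast
qed

lemma htymon_of_special_of: "htymon_of M (special_of M X) = X"
proof (rule colax.equality)
  show "har (htymon_of M (special_of M X)) = har X"
    unfolding htymon_of_def by (auto simp: sar_special_of_delta_dual har_undefined)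
  show "xi (htymon_of M (special_of M X)) = xi X"
    by (intro ext) (simp add: split_map_special_of)
  show "xi0 (htymon_of M (special_of M X)) = xi0 X"
    by (simp add: xi0_eq_bang)
qed simp_all

end

context special
begin

lemma special_of_htymon_of: "special_of M (htymon_of M Y) = Y"
proof (rule simpobj.equality)
  interpret X: homotopy_monoid M "htymon_of M Y"
    by unfold_locales (rule htymon_of_htymon)
  have inner_face: "xi_mid M (htymon_of M Y) 1 m 1 = sar Y (scomp (alpha2 1 (m + 1)) (alpha1 m 1))" for m
    unfolding xi_mid_def xi_left_def xi_right_def
    using sar_scomp[of "alpha1 m 1" "alpha2 1 (m + 1)"] by simp
  have "sar (special_of M (htymon_of M Y)) t = sar Y t" if t: "deltap_mor t" for t
  proof -
    have "sar (special_of M (htymon_of M Y)) t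
        = sar Y (scomp (alpha2 1 (fst t + 1)) (alpha1 (fst t) 1)) \<cdot> sar Y (delta_dual (deltap_dual t))"
      using t by (simp only: sar_special_of inner_face har_htymon_of delta_mor_deltap_dual)
    also have "\<dots> = sar Y t"
      using t sar_scomp[of "scomp (alpha2 1 (fst t + 1)) (alpha1 (fst t) 1)" "delta_dual (deltap_dual t)"]
        delta_dual_deltap_dual[OF t] by simp
    finally show ?thesis .
  qed
  then show "sar (special_of M (htymon_of M Y)) = sar Y"
    by (auto simp: special_of_def sar_undefined)
qed simp_all

end

section \<open>The isomorphism of categories\<close>

context cartesian_eqv
begin

lemma is_special_special_of: "is_htymon M X \<Longrightarrow> is_special M (special_of M X)"
  by (rule homotopy_monoid.special_of_special) unfold_locales

lemma is_htymon_htymon_of: "is_special M Y \<Longrightarrow> is_htymon M (htymon_of M Y)"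
  by (rule special.htymon_of_htymon) unfold_locales

lemma htymon_of_special_of: "is_htymon M X \<Longrightarrow> htymon_of M (special_of M X) = X"
  by (rule homotopy_monoid.htymon_of_special_of) unfold_locales

lemma special_of_htymon_of: "is_special M Y \<Longrightarrow> special_of M (htymon_of M Y) = Y"
  by (rule special.special_of_htymon_of) unfold_locales

lemma montrans_xi_mid:
  assumes X: "is_htymon M X" and X': "is_htymon M X'" and \<theta>: "is_montrans M X X' \<theta>"
  shows "\<theta> k \<cdot> xi_mid M X a k c = xi_mid M X' a k c \<cdot> \<theta> (a + (k + c))"
proof -
  interpret A: homotopy_monoid M X by unfold_locales (rule X)
  interpret B: homotopy_monoid M X' by unfold_locales (rule X')
  have \<theta>_hom [simp]: "\<theta> n \<in> Ar M" "Dom M (\<theta> n) = hob X n" "Cod M (\<theta> n) = hob X' n" for n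
    using \<theta> unfolding is_montrans_def hom_def by auto
  have xi: "xi X' a b \<cdot> \<theta> (a + b) = tens M (\<theta> a) (\<theta> b) \<cdot> xi X a b" for a b
    using \<theta> unfolding is_montrans_def by auto
  have left: "\<theta> a \<cdot> xi_left M X a b = xi_left M X' a b \<cdot> \<theta> (a + b)" for a b
    unfolding xi_left_def by (simp add: xi)
  have right: "\<theta> b \<cdot> xi_right M X a b = xi_right M X' a b \<cdot> \<theta> (a + b)" for a b
    unfolding xi_right_def by (simp add: xi)
  have "\<theta> k \<cdot> xi_mid M X a k c = (\<theta> k \<cdot> xi_left M X k c) \<cdot> xi_right M X a (k + c)"
    unfolding xi_mid_def by simp
  also have "\<dots> = xi_left M X' k c \<cdot> (\<theta> (k + c) \<cdot> xi_right M X a (k + c))"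
    unfolding left by simp
  also have "\<dots> = xi_mid M X' a k c \<cdot> \<theta> (a + (k + c))"
    unfolding right xi_mid_def by simp
  finally show ?thesis .
qed

lemma nattrans_sp_special_of:
  assumes X: "is_htymon M X" and X': "is_htymon M X'" and \<theta>: "is_montrans M X X' \<theta>"
  shows "is_nattrans_sp M (special_of M X) (special_of M X') \<theta>"
proof -
  interpret A: homotopy_monoid M X by unfold_locales (rule X)
  interpret B: homotopy_monoid M X' by unfold_locales (rule X')
  have \<theta>_hom [simp]: "\<theta> n \<in> Ar M" "Dom M (\<theta> n) = hob X n" "Cod M (\<theta> n) = hob X' n" for n
    using \<theta> unfolding is_montrans_def hom_def by auto
  have natural: "\<theta> (fst (snd t)) \<cdot> har X t = har X' t \<cdot> \<theta> (fst t)" if "delta_mor t" for t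
    using \<theta> that unfolding is_montrans_def by (cases t) auto
  show ?thesis unfolding is_nattrans_sp_def
  proof (intro conjI allI impI)
    fix m n l assume t: "deltap_mor (m, n, l)"
    have "\<theta> m \<cdot> sar (special_of M X) (m, n, l) = (\<theta> m \<cdot> xi_mid M X 1 m 1) \<cdot> har X (deltap_dual (m, n, l))"
      using t by (simp add: sar_special_of)
    also have "\<dots> = xi_mid M X' 1 m 1 \<cdot> (\<theta> (Suc (Suc m)) \<cdot> har X (deltap_dual (m, n, l)))"
      using t by (simp add: montrans_xi_mid[OF X X' \<theta>])
    also have "\<dots> = sar (special_of M X') (m, n, l) \<cdot> \<theta> n"
      using t natural[of "deltap_dual (m, n, l)"] by (simp add: sar_special_of)
    finally show "\<theta> m \<cdot> sar (special_of M X) (m, n, l) = sar (special_of M X') (m, n, l) \<cdot> \<theta> n" .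
  qed (simp add: hom_def)
qed

lemma montrans_htymon_of:
  assumes Y: "is_special M Y" and Y': "is_special M Y'" and \<theta>: "is_nattrans_sp M Y Y' \<theta>"
  shows "is_montrans M (htymon_of M Y) (htymon_of M Y') \<theta>"
proof -
  interpret A: special M Y by unfold_locales (rule Y)
  interpret B: special M Y' by unfold_locales (rule Y')
  have \<theta>_hom [simp]: "\<theta> n \<in> Ar M" "Dom M (\<theta> n) = sob Y n" "Cod M (\<theta> n) = sob Y' n" for n
    using \<theta> unfolding is_nattrans_sp_def hom_def by auto
  have natural: "\<theta> (fst t) \<cdot> sar Y t = sar Y' t \<cdot> \<theta> (fst (snd t))" if "deltap_mor t" for t
    using \<theta> that unfolding is_nattrans_sp_def by (cases t) auto
  show ?thesis unfolding is_montrans_def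
  proof (intro conjI allI impI)
    fix m n l assume "delta_mor (m, n, l)"
    then show "\<theta> n \<cdot> har (htymon_of M Y) (m, n, l) = har (htymon_of M Y') (m, n, l) \<cdot> \<theta> m"
      using natural[of "delta_dual (m, n, l)"] by simp
  next
    fix m n
    show "xi (htymon_of M Y') m n \<cdot> \<theta> (m + n) = tens M (\<theta> m) (\<theta> n) \<cdot> xi (htymon_of M Y) m n"
      by (rule to_prd_eqI[of _ _ "sob Y' m" "sob Y' n"])
        (use natural[of "alpha1 m n"] natural[of "alpha2 m n"] in \<open>simp_all add: split_map_def\<close>)
  qed (simp_all add: hom_def bang_comp)
qed

lemma functor_special_of:
  "is_functor (HtyAlg_Mon M) (Special M) (special_of M) (\<lambda>(X, X', \<theta>). (special_of M X, special_of M X', \<theta>))"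
  unfolding is_functor_def HtyAlg_Mon_def Special_def
  by (auto simp: hom_def is_special_special_of nattrans_sp_special_of)

lemma functor_htymon_of:
  "is_functor (Special M) (HtyAlg_Mon M) (htymon_of M) (\<lambda>(Y, Y', \<theta>). (htymon_of M Y, htymon_of M Y', \<theta>))"
  unfolding is_functor_def HtyAlg_Mon_def Special_def
  by (auto simp: hom_def is_htymon_htymon_of montrans_htymon_of)

end

theorem corollary3p1p9:
  fixes M :: "('o,'a) cmc"
  assumes "cartesian_with_equivalences M"
  shows "iso_categories (HtyAlg_Mon M) (Special M)"
proof -
  interpret cartesian_eqv M by unfold_locales (rule assms)
  show ?thesis unfolding iso_categories_def
  proof (intro exI conjI)
    show "is_functor (HtyAlg_Mon M) (Special M) (special_of M) (\<lambda>(X, X', \<theta>). (special_of M X, special_of M X', \<theta>))"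
      by (rule functor_special_of)
    show "is_functor (Special M) (HtyAlg_Mon M) (htymon_of M) (\<lambda>(Y, Y', \<theta>). (htymon_of M Y, htymon_of M Y', \<theta>))"
      by (rule functor_htymon_of)
  qed (auto simp: HtyAlg_Mon_def Special_def htymon_of_special_of special_of_htymon_of)
qed

end
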